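(* Let $n\ge2$, let $A,B$ be $n\times n$ positive definite matrices, $q\in\mathbb{C}$ with $0<|q|\le1$, and $f\in\mathcal{F}$. Then (a) $|q|^2f(w_q(A))\le|q|\,w_q(f(A))\le f(w_q(A))$; (b) for every $\gamma\in(0,1)$, $|q|\,w_q\big((1-\gamma)f(A)+\gamma f(B)\big)\le f\big((1-\gamma)w_q(A)+\gamma w_q(B)\big)$; (c) for every $t\in(0,1)$, $|q|\,w_q((A+B)^t)\le w_q(A^t+B^t)$.
   Context: $\mathcal{F}$ is the set of operator monotone functions $f:(0,\infty)\to(0,\infty)$ with $f(1)=1$; $f(A)$ is defined by functional calculus. $w_q(A)=\sup\{|\langle Ax,y\rangle|:\|x\|=\|y\|=1,\ \langle x,y\rangle=q\}$. *)

theory Defs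
  imports "Jordan_Normal_Form.Schur_Decomposition"
begin

text \<open>Complex n x n matrices are represented as JNF matrices with explicit dimension n.
  Inner product: x \<bullet>c y = sum_i x_i * cnj (y_i) (linear in the first argument).\<close>

definition vnorm :: "complex vec \<Rightarrow> real" where
  "vnorm x = sqrt (Re (x \<bullet>c x))"

definition hermitian_mat :: "nat \<Rightarrow> complex mat \<Rightarrow> bool" where
  "hermitian_mat n A \<longleftrightarrow> A \<in> carrier_mat n n \<and> mat_adjoint A = A"

definition posdef_mat :: "nat \<Rightarrow> complex mat \<Rightarrow> bool" where
  "posdef_mat n A \<longleftrightarrow> hermitian_mat n A \<and>
     (\<forall>x \<in> carrier_vec n. x \<noteq> 0\<^sub>v n \<longrightarrow> Re ((A *\<^sub>v x) \<bullet>c x) > 0)"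

definition possemidef_mat :: "nat \<Rightarrow> complex mat \<Rightarrow> bool" where
  "possemidef_mat n A \<longleftrightarrow> hermitian_mat n A \<and>
     (\<forall>x \<in> carrier_vec n. Re ((A *\<^sub>v x) \<bullet>c x) \<ge> 0)"

definition loewner_le :: "nat \<Rightarrow> complex mat \<Rightarrow> complex mat \<Rightarrow> bool" where
  "loewner_le n A B \<longleftrightarrow> hermitian_mat n A \<and> hermitian_mat n B \<and> possemidef_mat n (B - A)"

definition unitary_mat :: "nat \<Rightarrow> complex mat \<Rightarrow> bool" where
  "unitary_mat n U \<longleftrightarrow> U \<in> carrier_mat n n \<and> U * mat_adjoint U = 1\<^sub>m n"

definition real_diag_mat :: "nat \<Rightarrow> (nat \<Rightarrow> real) \<Rightarrow> complex mat" where
  "real_diag_mat n d = mat n n (\<lambda>(i,j). if i = j then complex_of_real (d i) else 0)"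

text \<open>Functional calculus for a Hermitian n x n matrix A = U diag(d) U^*:
  f(A) = U diag(f(d_1),...,f(d_n)) U^*  (well defined, independent of the decomposition).\<close>
definition matfun :: "nat \<Rightarrow> (real \<Rightarrow> real) \<Rightarrow> complex mat \<Rightarrow> complex mat" where
  "matfun n f A = (SOME B. \<exists>U d. unitary_mat n U \<and>
       A = U * real_diag_mat n d * mat_adjoint U \<and>
       B = U * real_diag_mat n (\<lambda>i. f (d i)) * mat_adjoint U)"

definition operator_monotone :: "(real \<Rightarrow> real) \<Rightarrow> bool" where
  "operator_monotone f \<longleftrightarrow> (\<forall>x>0. f x > 0) \<and>
     (\<forall>m A B. posdef_mat m A \<and> posdef_mat m B \<and> loewner_le m A B \<longrightarrow>
        loewner_le m (matfun m f A) (matfun m f B))"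

definition class_F :: "(real \<Rightarrow> real) set" where
  "class_F = {f. operator_monotone f \<and> f 1 = 1}"

definition wq :: "nat \<Rightarrow> complex \<Rightarrow> complex mat \<Rightarrow> real" where
  "wq n q A = Sup {cmod ((A *\<^sub>v x) \<bullet>c y) | x y. x \<in> carrier_vec n \<and> y \<in> carrier_vec n \<and>
       vnorm x = 1 \<and> vnorm y = 1 \<and> x \<bullet>c y = q}"

end

theory Submission
  imports Defs "Jordan_Normal_Form.Spectral_Radius"
begin

text \<open>For a positive definite A with largest eigenvalue lambda one has
  |q| lambda <= w_q(A) <= lambda: the upper bound is Cauchy-Schwarz in an eigenbasis of A, the lower
  one comes from pairing a unit eigenvector x with y = conj(q) x +- sqrt(1 - |q|^2) z, z a unit vector
  orthogonal to x. As f(A) has largest eigenvalue f(lambda), parts (a) and (b) reduce to scalar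
  properties of f: monotonicity, concavity and s f(y) <= f(s y) for 0 < s <= 1, which follow from
  operator monotonicity on 1 x 1 and 2 x 2 matrices. For (c), put L = w_q(A^t + B^t) / |q|; the form
  of A^t + B^t is bounded by L on unit vectors, hence A <= L^((1-t)/t) A^t and B <= L^((1-t)/t) B^t,
  so the largest eigenvalue of A + B is at most L^(1/t).\<close>

section \<open>Inner products, adjoints and unitary matrices\<close>

lemma cscalar_prod_sum:
  assumes "y \<in> carrier_vec n"
  shows "x \<bullet>c y = (\<Sum>i<n. x $ i * cnj (y $ i))"
  using assms unfolding scalar_prod_def by (auto simp: atLeast0LessThan intro!: sum.cong)

lemma index_mult_mat_vec_sum:
  assumes "A \<in> carrier_mat n m" "x \<in> carrier_vec m" "i < n"
  shows "(A *\<^sub>v x) $ i = (\<Sum>j<m. A $$ (i,j) * x $ j)"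
  using assms by (simp add: scalar_prod_def atLeast0LessThan)

lemma index_mult_mat_sum:
  assumes "A \<in> carrier_mat n k" "B \<in> carrier_mat k m" "i < n" "j < m"
  shows "(A * B) $$ (i,j) = (\<Sum>l<k. A $$ (i,l) * B $$ (l,j))"
  using assms by (simp add: scalar_prod_def atLeast0LessThan)

lemma dim_mat_adjoint [simp]:
  "dim_row (mat_adjoint A) = dim_col A" "dim_col (mat_adjoint A) = dim_row A"
  unfolding mat_adjoint_def by simp_all

lemma index_mat_adjoint [simp]:
  "i < dim_col A \<Longrightarrow> j < dim_row A \<Longrightarrow> mat_adjoint A $$ (i,j) = cnj (A $$ (j,i))"
  unfolding mat_adjoint_def by (simp add: mat_of_rows_index)

lemma mat_adjoint_carrier [simp]: "A \<in> carrier_mat n m \<Longrightarrow> mat_adjoint A \<in> carrier_mat m n"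
  unfolding carrier_mat_def by simp

lemma mat_adjoint_adjoint [simp]: "mat_adjoint (mat_adjoint (A :: complex mat)) = A"
  by (rule eq_matI) simp_all

lemma mat_adjoint_one [simp]: "mat_adjoint (1\<^sub>m n :: complex mat) = 1\<^sub>m n"
  by (rule eq_matI) simp_all

lemma mat_adjoint_add:
  "A \<in> carrier_mat n m \<Longrightarrow> B \<in> carrier_mat n m \<Longrightarrow>
   mat_adjoint (A + B) = mat_adjoint A + mat_adjoint (B :: complex mat)"
  by (rule eq_matI) auto

lemma mat_adjoint_mult:
  assumes A: "A \<in> carrier_mat n k" and B: "B \<in> carrier_mat k m"
  shows "mat_adjoint (A * B) = mat_adjoint B * mat_adjoint (A :: complex mat)"
proof (rule eq_matI)
  fix i j assume "i < dim_row (mat_adjoint B * mat_adjoint A)"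
      "j < dim_col (mat_adjoint B * mat_adjoint A)"
  then have i: "i < m" and j: "j < n" using assms by auto
  have "mat_adjoint (A * B) $$ (i,j) = cnj ((A * B) $$ (j,i))" using A B i j by simp
  also have "\<dots> = (\<Sum>l<k. cnj (A $$ (j,l)) * cnj (B $$ (l,i)))"
    by (simp add: index_mult_mat_sum[OF A B j i] del: index_mult_mat)
  also have "\<dots> = (mat_adjoint B * mat_adjoint A) $$ (i,j)"
    using A B i j by (subst index_mult_mat_sum[of _ _ k]) (auto intro!: sum.cong)
  finally show "mat_adjoint (A * B) $$ (i,j) = (mat_adjoint B * mat_adjoint A) $$ (i,j)" .
qed (use A B in simp_all)

text \<open>Instances with all dimensions fixed, so that the simplifier can discharge the carrier
  conditions of assoc_mult_mat, whose inner dimensions are otherwise unconstrained.\<close>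

lemmas square_mat_mult_simps =
  assoc_mult_mat[of _ n n _ n _ n] mult_carrier_mat[of _ n n _ n]
  assoc_mult_mat_vec[of _ n n _ n] mult_mat_vec_carrier[of _ n n] for n

lemma cscalar_prod_mat_adjoint:
  assumes A: "A \<in> carrier_mat n m" and x: "x \<in> carrier_vec m" and y: "y \<in> carrier_vec n"
  shows "(A *\<^sub>v x) \<bullet>c y = x \<bullet>c (mat_adjoint A *\<^sub>v (y :: complex vec))"
proof -
  have AH: "mat_adjoint A \<in> carrier_mat m n" using A by simp
  have "(A *\<^sub>v x) \<bullet>c y = (\<Sum>i<n. \<Sum>j<m. A $$ (i,j) * x $ j * cnj (y $ i))"
    using assms by (simp add: cscalar_prod_sum[of _ n] index_mult_mat_vec_sum[OF A x]
        sum_distrib_right del: index_mult_mat_vec)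
  also have "\<dots> = (\<Sum>j<m. \<Sum>i<n. A $$ (i,j) * x $ j * cnj (y $ i))"
    by (rule sum.swap)
  also have "\<dots> = (\<Sum>j<m. x $ j * cnj (\<Sum>i<n. cnj (A $$ (i,j)) * y $ i))"
    by (simp add: sum_distrib_left mult_ac)
  also have "\<dots> = x \<bullet>c (mat_adjoint A *\<^sub>v y)"
    using A AH y by (simp add: cscalar_prod_sum[OF mult_mat_vec_carrier[OF AH y]]
        index_mult_mat_vec_sum[OF AH y] del: index_mult_mat_vec)
  finally show ?thesis .
qed

lemma cscalar_prod_smult:
  assumes "x \<in> carrier_vec n" "y \<in> carrier_vec n"
  shows "(a \<cdot>\<^sub>v x) \<bullet>c (b \<cdot>\<^sub>v y) = a * cnj b * (x \<bullet>c (y :: complex vec))"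
  using assms by (simp add: cscalar_prod_sum[of _ n] sum_distrib_left mult_ac)

lemma cscalar_prod_smult_left:
  assumes "x \<in> carrier_vec n" "y \<in> carrier_vec n"
  shows "(a \<cdot>\<^sub>v x) \<bullet>c y = a * (x \<bullet>c (y :: complex vec))"
  using assms by (simp add: cscalar_prod_sum[of _ n] sum_distrib_left mult.assoc)

lemma cscalar_prod_smult_right:
  assumes "x \<in> carrier_vec n" "y \<in> carrier_vec n"
  shows "x \<bullet>c (b \<cdot>\<^sub>v y) = cnj b * (x \<bullet>c (y :: complex vec))"
  using assms by (simp add: cscalar_prod_sum[of _ n] sum_distrib_left mult_ac)

lemma cscalar_prod_add_left:
  assumes "x \<in> carrier_vec n" "w \<in> carrier_vec n" "y \<in> carrier_vec n"
  shows "(x + w) \<bullet>c y = x \<bullet>c y + w \<bullet>c (y :: complex vec)"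
  using assms by (simp add: cscalar_prod_sum[of _ n] sum.distrib distrib_right)

lemma cscalar_prod_add_right:
  assumes "x \<in> carrier_vec n" "w \<in> carrier_vec n" "y \<in> carrier_vec n"
  shows "y \<bullet>c (x + w) = y \<bullet>c x + y \<bullet>c (w :: complex vec)"
  using assms by (simp add: cscalar_prod_sum[of _ n] sum.distrib distrib_left)

lemma cscalar_prod_swap:
  assumes "x \<in> carrier_vec n" "y \<in> carrier_vec n"
  shows "x \<bullet>c y = cnj (y \<bullet>c (x :: complex vec))"
  using assms by (simp add: cscalar_prod_sum[of _ n] mult_ac)

lemma cscalar_prod_self:
  assumes "x \<in> carrier_vec n"
  shows "x \<bullet>c (x :: complex vec) = of_real (\<Sum>i<n. (cmod (x $ i))\<^sup>2)"
  unfolding cscalar_prod_sum[OF assms] of_real_sum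
  by (intro sum.cong refl) (simp only: complex_norm_square)

lemma cscalar_prod_self_real:
  "x \<in> carrier_vec n \<Longrightarrow> x \<bullet>c (x :: complex vec) = of_real (Re (x \<bullet>c x))"
  using cscalar_prod_self by (metis Re_complex_of_real)

lemma cscalar_prod_unit_vec:
  assumes "k < n"
  shows "unit_vec n k \<bullet>c unit_vec n k = (1 :: complex)"
proof -
  have "unit_vec n k \<bullet>c unit_vec n k = (\<Sum>i<n. if i = k then 1 else 0 :: complex)"
    unfolding cscalar_prod_sum[OF unit_vec_carrier]
      by (intro sum.cong refl) (simp add: unit_vec_def)
  then show ?thesis using assms by simp
qed

lemma Re_cscalar_prod_self_nonneg: "x \<in> carrier_vec n \<Longrightarrow> 0 \<le> Re (x \<bullet>c (x :: complex vec))"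
  using cscalar_prod_self by (simp add: sum_nonneg)

lemma vnorm_square:
  assumes "x \<in> carrier_vec n"
  shows "x \<bullet>c x = of_real ((vnorm x)\<^sup>2)"
  unfolding vnorm_def using cscalar_prod_self_real[OF assms] Re_cscalar_prod_self_nonneg[OF assms]
  by simp

lemma vnorm_eq_1_iff:
  assumes "x \<in> carrier_vec n"
  shows "vnorm x = 1 \<longleftrightarrow> x \<bullet>c x = 1"
proof -
  have "vnorm x = 1 \<longleftrightarrow> Re (x \<bullet>c x) = 1" unfolding vnorm_def by simp
  also have "\<dots> \<longleftrightarrow> x \<bullet>c x = 1"
    using cscalar_prod_self_real[OF assms] by (metis of_real_1 one_complex.sel(1))
  finally show ?thesis .
qed

lemma vnorm_pos:
  assumes "x \<in> carrier_vec n" "x \<noteq> 0\<^sub>v n"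
  shows "0 < vnorm x"
proof -
  have "x \<bullet>c x \<noteq> 0" using assms by simp
  then have "Re (x \<bullet>c x) \<noteq> 0" using cscalar_prod_self_real[OF assms(1)] by (metis of_real_0)
  then show ?thesis unfolding vnorm_def using Re_cscalar_prod_self_nonneg[OF assms(1)] by simp
qed

lemma cscalar_prod_normalize:
  assumes v: "v \<in> carrier_vec n" and v0: "v \<noteq> 0\<^sub>v n"
  shows "(complex_of_real (1 / vnorm v) \<cdot>\<^sub>v v) \<bullet>c (complex_of_real (1 / vnorm v) \<cdot>\<^sub>v v) = 1"
proof -
  have "(complex_of_real (1 / vnorm v) \<cdot>\<^sub>v v) \<bullet>c (complex_of_real (1 / vnorm v) \<cdot>\<^sub>v v)
      = complex_of_real (1 / vnorm v * (1 / vnorm v) * (vnorm v)\<^sup>2)"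
    by (simp add: cscalar_prod_smult[OF v v] vnorm_square[OF v])
  also have "\<dots> = 1" using vnorm_pos[OF v v0] by (simp add: power2_eq_square)
  finally show ?thesis .
qed

lemma index_adjoint_mult_mat:
  assumes X: "X \<in> carrier_mat k n" and Y: "Y \<in> carrier_mat k m" and i: "i < n" and j: "j < m"
  shows "(mat_adjoint X * Y) $$ (i,j) = col Y j \<bullet>c col (X :: complex mat) i"
proof -
  have XH: "mat_adjoint X \<in> carrier_mat n k" using X by simp
  have "(mat_adjoint X * Y) $$ (i,j) = (\<Sum>l<k. cnj (X $$ (l,i)) * Y $$ (l,j))"
    using X Y i j by (simp add: index_mult_mat_sum[OF XH Y i j] del: index_mult_mat)
  also have "\<dots> = col Y j \<bullet>c col X i"
    using X Y i j by (subst cscalar_prod_sum[of _ k]) (auto intro!: sum.cong)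
  finally show ?thesis .
qed

lemma unitary_mat_carrier [simp]: "unitary_mat n U \<Longrightarrow> U \<in> carrier_mat n n"
  unfolding unitary_mat_def by simp

lemma unitary_mat_adjoint_mult: "unitary_mat n U \<Longrightarrow> mat_adjoint U * U = 1\<^sub>m n"
  unfolding unitary_mat_def by (auto intro: mat_mult_left_right_inverse)

lemma unitary_mat_mult_adjoint: "unitary_mat n U \<Longrightarrow> U * mat_adjoint U = 1\<^sub>m n"
  unfolding unitary_mat_def by simp

lemma unitary_mat_cancel:
  assumes U: "unitary_mat n U" and X: "X \<in> carrier_mat n k"
  shows "U * (mat_adjoint U * X) = X" and "mat_adjoint U * (U * X) = X"
proof -
  have Uc: "U \<in> carrier_mat n n" and UH: "mat_adjoint U \<in> carrier_mat n n"
    using U unfolding unitary_mat_def by (auto simp: mat_adjoint_carrier)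
  show "U * (mat_adjoint U * X) = X"
    using assoc_mult_mat[OF Uc UH X] unitary_mat_mult_adjoint[OF U] X by simp
  show "mat_adjoint U * (U * X) = X"
    using assoc_mult_mat[OF UH Uc X] unitary_mat_adjoint_mult[OF U] X by simp
qed

lemma unitary_matI:
  "U \<in> carrier_mat n n \<Longrightarrow> mat_adjoint U * U = 1\<^sub>m n \<Longrightarrow> unitary_mat n U"
  unfolding unitary_mat_def by (auto intro: mat_mult_left_right_inverse)

lemma unitary_mat_one: "unitary_mat n (1\<^sub>m n)"
  unfolding unitary_mat_def by simp

lemma unitary_mat_adjoint: "unitary_mat n U \<Longrightarrow> unitary_mat n (mat_adjoint U)"
  using unitary_mat_adjoint_mult unfolding unitary_mat_def by auto

lemma unitary_mat_mult:
  assumes "unitary_mat n U" "unitary_mat n V"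
  shows "unitary_mat n (U * V)"
proof (rule unitary_matI)
  have U: "U \<in> carrier_mat n n" and V: "V \<in> carrier_mat n n"
    using assms unitary_mat_carrier by auto
  have UH: "mat_adjoint U \<in> carrier_mat n n" and VH: "mat_adjoint V \<in> carrier_mat n n"
    using U V by auto
  show "U * V \<in> carrier_mat n n" using U V by simp
  have "mat_adjoint (U * V) * (U * V) = mat_adjoint V * (mat_adjoint U * (U * V))"
    unfolding mat_adjoint_mult[OF U V] by (rule assoc_mult_mat[OF VH UH mult_carrier_mat[OF U V]])
  also have "\<dots> = mat_adjoint V * ((mat_adjoint U * U) * V)"
    using UH U V by (simp only: assoc_mult_mat)
  also have "\<dots> = 1\<^sub>m n"
    using V by (simp add: unitary_mat_adjoint_mult[OF assms(1)] unitary_mat_adjoint_mult[OF assms(2)])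
  finally show "mat_adjoint (U * V) * (U * V) = 1\<^sub>m n" .
qed

lemma unitary_mat_cscalar_prod:
  assumes U: "unitary_mat n U" and x: "x \<in> carrier_vec n" and y: "y \<in> carrier_vec n"
  shows "(U *\<^sub>v x) \<bullet>c (U *\<^sub>v y) = x \<bullet>c y"
proof -
  have Uc: "U \<in> carrier_mat n n" using U unitary_mat_carrier by auto
  have UH: "mat_adjoint U \<in> carrier_mat n n" using Uc by simp
  have "(U *\<^sub>v x) \<bullet>c (U *\<^sub>v y) = x \<bullet>c (mat_adjoint U *\<^sub>v (U *\<^sub>v y))"
    using Uc x y by (simp add: cscalar_prod_mat_adjoint[of _ n n])
  also have "mat_adjoint U *\<^sub>v (U *\<^sub>v y) = y"
    unfolding assoc_mult_mat_vec[OF UH Uc y, symmetric] unitary_mat_adjoint_mult[OF U] using y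
      by simp
  finally show ?thesis .
qed

lemma unitary_mat_col_orthonormal:
  assumes U: "unitary_mat n U" and i: "i < n" and j: "j < n"
  shows "col U i \<bullet>c col U j = (if i = j then 1 else 0)"
  using index_adjoint_mult_mat[OF _ _ j i, of U n U] unitary_mat_adjoint_mult[OF U]
    unitary_mat_carrier[OF U] i j
  by auto

lemma unitary_mat_of_orthonormal_cols:
  assumes us: "set us \<subseteq> carrier_vec n" "length us = n"
    and orth: "\<And>i j. i < n \<Longrightarrow> j < n \<Longrightarrow> us ! i \<bullet>c us ! j = (if i = j then 1 else 0)"
  shows "unitary_mat n (mat_of_cols n us)"
proof (rule unitary_matI)
  let ?W = "mat_of_cols n us"
  show W: "?W \<in> carrier_mat n n" using us by auto
  show "mat_adjoint ?W * ?W = 1\<^sub>m n"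
  proof (rule eq_matI)
    fix i j assume "i < dim_row (1\<^sub>m n :: complex mat)" "j < dim_col (1\<^sub>m n :: complex mat)"
    then have i: "i < n" and j: "j < n" by auto
    have "col ?W k = us ! k" if "k < n" for k using us that nth_mem by (simp add: subset_iff)
    then show "(mat_adjoint ?W * ?W) $$ (i,j) = 1\<^sub>m n $$ (i,j)"
      using index_adjoint_mult_mat[OF W W i j] orth[OF j i] i j by auto
  qed (use us in simp_all)
qed

lemma unitary_mat_with_first_col:
  assumes v: "v \<in> carrier_vec n" and vv: "v \<bullet>c v = 1"
  shows "\<exists>W. unitary_mat n W \<and> col W 0 = v"
proof -
  have v0: "v \<noteq> 0\<^sub>v n" using vv v by auto
  then have n: "0 < n" using v by (cases n) auto
  interpret cof_vec_space n "TYPE(complex)" .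
  define b where "b = basis_completion v"
  have b: "set b \<subseteq> carrier_vec n" "distinct b" "\<not> lin_dep (set b)" "length b = n"
    using basis_completion[OF v v0] unfolding b_def by auto
  obtain vs where bv: "b = v # vs" unfolding b_def basis_completion_def Let_def by simp
  define ws where "ws = gram_schmidt n b"
  have ws: "set ws \<subseteq> carrier_vec n" "corthogonal ws" "length ws = n"
    using gram_schmidt_result[OF b(1-3) ws_def] b(4) by auto
  have "ws \<noteq> []" using ws(3) n by auto
  then have ws0: "ws ! 0 = v"
    using gram_schmidt_hd[OF v, of vs] unfolding ws_def bv by (simp add: hd_conv_nth[symmetric])
  have wsi: "ws ! i \<in> carrier_vec n" "ws ! i \<noteq> 0\<^sub>v n" if "i < n" for i
    using ws corthogonalD[OF ws(2), of i i] that nth_mem by fastforce+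
  define us where "us = map (\<lambda>w. complex_of_real (1 / vnorm w) \<cdot>\<^sub>v w) ws"
  have us: "set us \<subseteq> carrier_vec n" "length us = n" using ws unfolding us_def by auto
  have orth: "us ! i \<bullet>c us ! j = (if i = j then 1 else 0)" if i: "i < n" and j: "j < n" for i j
  proof (cases "i = j")
    case True
    then show ?thesis using cscalar_prod_normalize[OF wsi[OF i]] i ws(3) by (simp add: us_def)
  next
    case False
    then have "ws ! i \<bullet>c ws ! j = 0" using corthogonalD[OF ws(2), of i j] i j ws(3) by simp
    then show ?thesis using False i j ws(3) wsi by (simp add: us_def cscalar_prod_smult[of _ n])
  qed
  have "vnorm v = 1" using vv vnorm_eq_1_iff[OF v] by simp
  then have "us ! 0 = v" using ws0 ws(3) n by (simp add: us_def)
  moreover have "us ! 0 \<in> carrier_vec n" using us n nth_mem by blast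
  ultimately have "col (mat_of_cols n us) 0 = v" using us n by simp
  then show ?thesis using unitary_mat_of_orthonormal_cols[OF us orth] by blast
qed

section \<open>The spectral theorem for Hermitian matrices\<close>

lemma real_diag_mat_carrier [simp]: "real_diag_mat n d \<in> carrier_mat n n"
  unfolding real_diag_mat_def by simp

lemma dim_real_diag_mat [simp]: "dim_row (real_diag_mat n d) = n" "dim_col (real_diag_mat n d) = n"
  unfolding real_diag_mat_def by simp_all

lemma index_real_diag_mat [simp]:
  "i < n \<Longrightarrow> j < n \<Longrightarrow> real_diag_mat n d $$ (i,j) = (if i = j then complex_of_real (d i) else 0)"
  unfolding real_diag_mat_def by simp

lemma mat_adjoint_real_diag_mat [simp]: "mat_adjoint (real_diag_mat n d) = real_diag_mat n d"
  by (rule eq_matI) auto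

lemma hermitian_mat_carrier: "hermitian_mat n A \<Longrightarrow> A \<in> carrier_mat n n"
  unfolding hermitian_mat_def by simp

lemma hermitian_mat_congruence:
  assumes A: "hermitian_mat n A" and W: "W \<in> carrier_mat n m"
  shows "hermitian_mat m (mat_adjoint W * A * W)"
proof -
  have Ac: "A \<in> carrier_mat n n" and AH: "mat_adjoint A = A"
    using A unfolding hermitian_mat_def by auto
  have WH: "mat_adjoint W \<in> carrier_mat m n" using W by simp
  have "mat_adjoint (mat_adjoint W * A * W) = mat_adjoint W * mat_adjoint (mat_adjoint W * A)"
    using mat_adjoint_mult[OF mult_carrier_mat[OF WH Ac] W] by simp
  also have "\<dots> = mat_adjoint W * A * W"
    using W Ac by (simp add: mat_adjoint_mult[OF WH Ac] AH assoc_mult_mat[OF WH Ac W])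
  moreover have "mat_adjoint W * A * W \<in> carrier_mat m m"
    using mult_carrier_mat[OF mult_carrier_mat[OF WH Ac] W] .
  ultimately show ?thesis unfolding hermitian_mat_def by simp
qed

definition mat_diag_cons :: "complex \<Rightarrow> complex mat \<Rightarrow> complex mat" where
  "mat_diag_cons c X = mat (Suc (dim_row X)) (Suc (dim_col X))
     (\<lambda>(i,j). if i = 0 \<and> j = 0 then c else if i = 0 \<or> j = 0 then 0 else X $$ (i - 1, j - 1))"

lemma mat_diag_cons_carrier [simp]:
  "X \<in> carrier_mat m m \<Longrightarrow> mat_diag_cons c X \<in> carrier_mat (Suc m) (Suc m)"
  unfolding mat_diag_cons_def carrier_mat_def by simp

lemma dim_mat_diag_cons [simp]:
  "dim_row (mat_diag_cons c X) = Suc (dim_row X)" "dim_col (mat_diag_cons c X) = Suc (dim_col X)"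
  unfolding mat_diag_cons_def by simp_all

lemma index_mat_diag_cons:
  "i < Suc (dim_row X) \<Longrightarrow> j < Suc (dim_col X) \<Longrightarrow> mat_diag_cons c X $$ (i,j) =
    (if i = 0 \<and> j = 0 then c else if i = 0 \<or> j = 0 then 0 else X $$ (i - 1, j - 1))"
  unfolding mat_diag_cons_def by simp

lemma mat_diag_cons_mult:
  assumes X: "X \<in> carrier_mat m m" and Y: "Y \<in> carrier_mat m m"
  shows "mat_diag_cons c X * mat_diag_cons d Y = mat_diag_cons (c * d) (X * Y)"
proof (rule eq_matI)
  fix i j assume "i < dim_row (mat_diag_cons (c * d) (X * Y))"
      "j < dim_col (mat_diag_cons (c * d) (X * Y))"
  then have i: "i < Suc m" and j: "j < Suc m" using X Y by auto
  have "(mat_diag_cons c X * mat_diag_cons d Y) $$ (i,j)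
      = mat_diag_cons c X $$ (i,0) * mat_diag_cons d Y $$ (0,j)
        + (\<Sum>l<m. mat_diag_cons c X $$ (i, Suc l) * mat_diag_cons d Y $$ (Suc l, j))"
    using X Y by (subst index_mult_mat_sum[of _ "Suc m" "Suc m" _ "Suc m" i j])
      (simp_all add: i j del: sum.lessThan_Suc add: sum.lessThan_Suc_shift)
  also have "\<dots> = mat_diag_cons (c * d) (X * Y) $$ (i,j)"
  proof (cases "i = 0 \<or> j = 0")
    case True
    then show ?thesis using X Y i j by (auto simp: index_mat_diag_cons)
  next
    case False
    then obtain i' j' where ij: "i = Suc i'" "j = Suc j'" by (meson not0_implies_Suc)
    then have "(\<Sum>l<m. mat_diag_cons c X $$ (i, Suc l) * mat_diag_cons d Y $$ (Suc l, j))
        = (X * Y) $$ (i', j')"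
      using X Y i j
        by (simp add: index_mat_diag_cons index_mult_mat_sum[OF X Y] del: index_mult_mat)
    then show ?thesis using X Y i j ij by (simp add: index_mat_diag_cons)
  qed
  finally show "(mat_diag_cons c X * mat_diag_cons d Y) $$ (i,j)
      = mat_diag_cons (c * d) (X * Y) $$ (i,j)" .
qed (use X Y in simp_all)

lemma mat_adjoint_diag_cons:
  assumes X: "X \<in> carrier_mat m m"
  shows "mat_adjoint (mat_diag_cons c X) = mat_diag_cons (cnj c) (mat_adjoint X)"
  by (rule eq_matI) (use X in \<open>auto simp: index_mat_diag_cons\<close>)

lemma mat_diag_cons_one: "mat_diag_cons 1 (1\<^sub>m m) = 1\<^sub>m (Suc m)"
  by (rule eq_matI) (auto simp: index_mat_diag_cons)

lemma mat_diag_cons_real_diag: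
  "mat_diag_cons (complex_of_real r) (real_diag_mat m d) = real_diag_mat (Suc m) (case_nat r d)"
  by (rule eq_matI) (auto simp: index_mat_diag_cons split: nat.split)

lemma unitary_mat_diag_cons: "unitary_mat m V \<Longrightarrow> unitary_mat (Suc m) (mat_diag_cons 1 V)"
  unfolding unitary_mat_def
    by (auto simp: mat_adjoint_diag_cons mat_diag_cons_mult mat_diag_cons_one)

lemma hermitian_mat_diag_cons_split:
  assumes B: "hermitian_mat (Suc m) B" and col0: "\<And>i. 0 < i \<Longrightarrow> i < Suc m \<Longrightarrow> B $$ (i,0) = 0"
  shows "\<exists>r C. hermitian_mat m C \<and> B = mat_diag_cons (complex_of_real r) C"
proof -
  have Bc: "B \<in> carrier_mat (Suc m) (Suc m)" and BH: "mat_adjoint B = B"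
    using B unfolding hermitian_mat_def by auto
  have sym: "B $$ (j,i) = cnj (B $$ (i,j))" if "i < Suc m" "j < Suc m" for i j
    using arg_cong[OF BH, of "\<lambda>M. M $$ (j,i)"] Bc that by simp
  define C where "C = mat m m (\<lambda>(i,j). B $$ (Suc i, Suc j))"
  have "mat_adjoint C = C"
  proof (rule eq_matI)
    fix i j assume "i < dim_row C" "j < dim_col C"
    then show "mat_adjoint C $$ (i,j) = C $$ (i,j)" using sym[of "Suc j" "Suc i"]
      by (simp add: C_def)
  qed (simp_all add: C_def)
  then have "hermitian_mat m C" unfolding hermitian_mat_def C_def by simp
  moreover have "B = mat_diag_cons (complex_of_real (Re (B $$ (0,0)))) C"
  proof (rule eq_matI)
    have "B $$ (0,0) \<in> \<real>" using sym[of 0 0] by (simp add: Reals_cnj_iff)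
    then have B00: "complex_of_real (Re (B $$ (0,0))) = B $$ (0,0)"
      by (simp add: complex_is_Real_iff)
    fix i j assume "i < dim_row (mat_diag_cons (complex_of_real (Re (B $$ (0,0)))) C)"
      "j < dim_col (mat_diag_cons (complex_of_real (Re (B $$ (0,0)))) C)"
    then have i: "i < Suc m" and j: "j < Suc m" by (auto simp: C_def)
    show "B $$ (i,j) = mat_diag_cons (complex_of_real (Re (B $$ (0,0)))) C $$ (i,j)"
      using col0 sym[of 0 j] col0[of j] i j B00
        by (cases i; cases j) (auto simp: index_mat_diag_cons C_def)
  qed (use Bc in \<open>simp_all add: C_def\<close>)
  ultimately show ?thesis by blast
qed

lemma unit_eigenvector_exists:
  assumes A: "(A :: complex mat) \<in> carrier_mat n n" and n: "0 < n"
  shows "\<exists>e v. v \<in> carrier_vec n \<and> v \<bullet>c v = 1 \<and> A *\<^sub>v v = e \<cdot>\<^sub>v v"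
proof -
  obtain e where "e \<in> spectrum A" using spectrum_non_empty[OF A n] by auto
  then obtain v where "eigenvector A v e" unfolding spectrum_def eigenvalue_def by auto
  then have v: "v \<in> carrier_vec n" "v \<noteq> 0\<^sub>v n" and Av: "A *\<^sub>v v = e \<cdot>\<^sub>v v"
    using A unfolding eigenvector_def by auto
  define u where "u = complex_of_real (1 / vnorm v) \<cdot>\<^sub>v v"
  have "A *\<^sub>v u = e \<cdot>\<^sub>v u"
    unfolding u_def using A v Av by (simp add: mult_mat_vec smult_smult_assoc mult.commute)
  moreover have "u \<in> carrier_vec n" "u \<bullet>c u = 1"
    unfolding u_def using v cscalar_prod_normalize[OF v] by auto
  ultimately show ?thesis by blast
qed

lemma unitary_mat_conj_cancel:
  assumes W: "unitary_mat n W" and A: "A \<in> carrier_mat n n"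
  shows "W * (mat_adjoint W * A * W) * mat_adjoint W = A"
proof -
  have Wc: "W \<in> carrier_mat n n" and WH: "mat_adjoint W \<in> carrier_mat n n" using W by auto
  have "W * (mat_adjoint W * A * W) = A * W"
    unfolding assoc_mult_mat[OF WH A Wc]
      by (rule unitary_mat_cancel(1)[OF W mult_carrier_mat[OF A Wc]])
  then show ?thesis using A by (simp add: assoc_mult_mat[OF A Wc WH] unitary_mat_mult_adjoint[OF W])
qed

lemma hermitian_mat_deflation:
  assumes "hermitian_mat (Suc m) A"
  obtains W r C where "unitary_mat (Suc m) W" and "hermitian_mat m C"
    and "mat_adjoint W * A * W = mat_diag_cons (complex_of_real r) C"
proof -
  have A: "A \<in> carrier_mat (Suc m) (Suc m)" using assms hermitian_mat_carrier by blast
  obtain e v where v: "v \<in> carrier_vec (Suc m)" "v \<bullet>c v = 1" and Av: "A *\<^sub>v v = e \<cdot>\<^sub>v v"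
    using unit_eigenvector_exists[OF A] by blast
  obtain W where W: "unitary_mat (Suc m) W" and W0: "col W 0 = v"
    using unitary_mat_with_first_col[OF v] by blast
  have Wc: "W \<in> carrier_mat (Suc m) (Suc m)" and WH: "mat_adjoint W \<in> carrier_mat (Suc m) (Suc m)"
    using W by auto
  have AW: "A * W \<in> carrier_mat (Suc m) (Suc m)" using A Wc by simp
  have "(mat_adjoint W * A * W) $$ (i,0) = 0" if i: "0 < i" "i < Suc m" for i
  proof -
    have "(mat_adjoint W * A * W) $$ (i,0) = (A *\<^sub>v col W 0) \<bullet>c col W i"
      unfolding assoc_mult_mat[OF WH A Wc] index_adjoint_mult_mat[OF Wc AW i(2) zero_less_Suc]
      by (simp only: col_mult2[OF A Wc zero_less_Suc])
    also have "\<dots> = e * (col W 0 \<bullet>c col W i)"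
      using Wc i W0 v by (simp add: Av cscalar_prod_smult_left[of _ "Suc m"])
    finally show ?thesis using unitary_mat_col_orthonormal[OF W, of 0 i] i by simp
  qed
  then show ?thesis
    using that W hermitian_mat_diag_cons_split hermitian_mat_congruence[OF assms Wc] by blast
qed

theorem hermitian_mat_spectral:
  assumes "hermitian_mat n A"
  shows "\<exists>U d. unitary_mat n U \<and> A = U * real_diag_mat n d * mat_adjoint U"
  using assms
proof (induction n arbitrary: A)
  case 0
  then have "A = 1\<^sub>m 0 * real_diag_mat 0 (\<lambda>_. 0) * mat_adjoint (1\<^sub>m 0)"
    by (intro eq_matI) (auto simp: hermitian_mat_def)
  then show ?case using unitary_mat_one by blast
next
  case (Suc m)
  obtain W r C where W: "unitary_mat (Suc m) W" and C: "hermitian_mat m C"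
    and WAW: "mat_adjoint W * A * W = mat_diag_cons (complex_of_real r) C"
    using hermitian_mat_deflation[OF Suc.prems] .
  obtain V d where V: "unitary_mat m V" and CV: "C = V * real_diag_mat m d * mat_adjoint V"
    using Suc.IH[OF C] by blast
  have Vc: "V \<in> carrier_mat m m" and VH: "mat_adjoint V \<in> carrier_mat m m" using V by auto
  define V' where "V' = mat_diag_cons 1 V"
  have V': "unitary_mat (Suc m) V'" unfolding V'_def by (rule unitary_mat_diag_cons[OF V])
  have "mat_adjoint W * A * W = V' * real_diag_mat (Suc m) (case_nat r d) * mat_adjoint V'"
    unfolding WAW CV V'_def mat_diag_cons_real_diag[symmetric] mat_adjoint_diag_cons[OF Vc]
      mat_diag_cons_mult[OF Vc real_diag_mat_carrier]
      mat_diag_cons_mult[OF mult_carrier_mat[OF Vc real_diag_mat_carrier] VH]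
    by simp
  then have "A = W * (V' * real_diag_mat (Suc m) (case_nat r d) * mat_adjoint V') * mat_adjoint W"
    using unitary_mat_conj_cancel[OF W hermitian_mat_carrier[OF Suc.prems]] by simp
  also have "\<dots> = (W * V') * real_diag_mat (Suc m) (case_nat r d) * mat_adjoint (W * V')"
    using W V' by (simp add: mat_adjoint_mult[OF unitary_mat_carrier[OF W] unitary_mat_carrier[OF V']]
        square_mat_mult_simps[where n = "Suc m"])
  finally show ?case using unitary_mat_mult[OF W V'] by blast
qed

section \<open>Functional calculus and diagonalised forms\<close>

lemma index_mult_real_diag_mat_right:
  assumes X: "X \<in> carrier_mat n n" and i: "i < n" and j: "j < n"
  shows "(X * real_diag_mat n d) $$ (i,j) = X $$ (i,j) * complex_of_real (d j)"
proof -
  have "(X * real_diag_mat n d) $$ (i,j) = (\<Sum>l<n. X $$ (i,l) * real_diag_mat n d $$ (l,j))"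
    by (rule index_mult_mat_sum[OF X real_diag_mat_carrier i j])
  also have "\<dots> = (\<Sum>l<n. if l = j then X $$ (i,j) * complex_of_real (d j) else 0)"
    using j by (intro sum.cong refl) auto
  finally show ?thesis using j by simp
qed

lemma index_mult_real_diag_mat_left:
  assumes X: "X \<in> carrier_mat n n" and i: "i < n" and j: "j < n"
  shows "(real_diag_mat n d * X) $$ (i,j) = complex_of_real (d i) * X $$ (i,j)"
proof -
  have "(real_diag_mat n d * X) $$ (i,j) = (\<Sum>l<n. real_diag_mat n d $$ (i,l) * X $$ (l,j))"
    by (rule index_mult_mat_sum[OF real_diag_mat_carrier X i j])
  also have "\<dots> = (\<Sum>l<n. if l = i then complex_of_real (d i) * X $$ (i,j) else 0)"
    using i by (intro sum.cong refl) auto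
  finally show ?thesis using i by simp
qed

lemma index_unitary_diag:
  assumes U: "U \<in> carrier_mat n n" and i: "i < n" and j: "j < n"
  shows "(U * real_diag_mat n d * mat_adjoint U) $$ (i,j)
    = (\<Sum>k<n. U $$ (i,k) * complex_of_real (d k) * cnj (U $$ (j,k)))"
proof -
  have UD: "U * real_diag_mat n d \<in> carrier_mat n n" using U by simp
  show ?thesis
    unfolding index_mult_mat_sum[OF UD mat_adjoint_carrier[OF U] i j]
    using U i j
      by (intro sum.cong refl) (simp add: index_mult_real_diag_mat_right[OF U i] del: index_mult_mat)
qed

lemma sum_lessThan_2: "(\<Sum>i<2::nat. g i) = g 0 + g 1"
  by (simp add: numeral_2_eq_2)

lemma real_diag_mat_intertwining_fun:
  assumes K: "K \<in> carrier_mat n n" and KD: "K * real_diag_mat n d = real_diag_mat n e * K"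
  shows "K * real_diag_mat n (\<lambda>i. f (d i)) = real_diag_mat n (\<lambda>i. f (e i)) * K"
proof (rule eq_matI)
  fix i j assume "i < dim_row (real_diag_mat n (\<lambda>i. f (e i)) * K)"
      "j < dim_col (real_diag_mat n (\<lambda>i. f (e i)) * K)"
  then have i: "i < n" and j: "j < n" using K by auto
  have "K $$ (i,j) * complex_of_real (d j) = complex_of_real (e i) * K $$ (i,j)"
    using arg_cong[OF KD, of "\<lambda>M. M $$ (i,j)"]
    by (simp add: index_mult_real_diag_mat_right[OF K i j] index_mult_real_diag_mat_left[OF K i j])
  then have "K $$ (i,j) = 0 \<or> d j = e i" by (auto simp: mult.commute)
  then show "(K * real_diag_mat n (\<lambda>i. f (d i))) $$ (i,j)
      = (real_diag_mat n (\<lambda>i. f (e i)) * K) $$ (i,j)"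
    by (auto simp: index_mult_real_diag_mat_right[OF K i j] index_mult_real_diag_mat_left[OF K i j])
qed (use K in simp_all)

lemma unitary_diag_fun_unique:
  assumes U: "unitary_mat n U" and W: "unitary_mat n W"
    and eq: "U * real_diag_mat n d * mat_adjoint U = W * real_diag_mat n e * mat_adjoint W"
  shows "U * real_diag_mat n (\<lambda>i. f (d i)) * mat_adjoint U
      = W * real_diag_mat n (\<lambda>i. f (e i)) * mat_adjoint W"
proof -
  have Uc: "U \<in> carrier_mat n n" and Wc: "W \<in> carrier_mat n n"
    using U W unitary_mat_carrier by auto
  note simps = square_mat_mult_simps[where n = n] right_mult_one_mat[of _ n n] Uc Wc
    unitary_mat_cancel[OF U, where k = n] unitary_mat_cancel[OF W, where k = n]
    unitary_mat_adjoint_mult[OF U] unitary_mat_mult_adjoint[OF U]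
    unitary_mat_adjoint_mult[OF W] unitary_mat_mult_adjoint[OF W]
  define K where "K = mat_adjoint W * U"
  have K: "K \<in> carrier_mat n n" unfolding K_def
    using mult_carrier_mat[OF mat_adjoint_carrier[OF Wc] Uc] .
  have "mat_adjoint W * (U * real_diag_mat n d * mat_adjoint U) * U
      = mat_adjoint W * (W * real_diag_mat n e * mat_adjoint W) * U"
    by (simp only: eq)
  then have "K * real_diag_mat n d = real_diag_mat n e * K"
    unfolding K_def by (simp add: simps)
  then have KF: "K * real_diag_mat n (\<lambda>i. f (d i)) = real_diag_mat n (\<lambda>i. f (e i)) * K"
    by (rule real_diag_mat_intertwining_fun[OF K])
  have "U * real_diag_mat n (\<lambda>i. f (d i)) * mat_adjoint U
      = W * (K * real_diag_mat n (\<lambda>i. f (d i))) * mat_adjoint U"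
    unfolding K_def by (simp add: simps)
  also have "\<dots> = W * real_diag_mat n (\<lambda>i. f (e i)) * mat_adjoint W"
    unfolding KF unfolding K_def by (simp add: simps)
  finally show ?thesis .
qed

text \<open>matfun chooses one unitary diagonalisation by SOME; by unitary_diag_fun_unique every
  choice yields the same matrix.\<close>

lemma matfun_unitary_diag:
  assumes U: "unitary_mat n U"
  shows "matfun n f (U * real_diag_mat n d * mat_adjoint U)
      = U * real_diag_mat n (\<lambda>i. f (d i)) * mat_adjoint U"
proof -
  let ?A = "U * real_diag_mat n d * mat_adjoint U"
  define P where "P B = (\<exists>U d. unitary_mat n U \<and> ?A = U * real_diag_mat n d * mat_adjoint U \<and>
       B = U * real_diag_mat n (\<lambda>i. f (d i)) * mat_adjoint U)" for B
  have "P (U * real_diag_mat n (\<lambda>i. f (d i)) * mat_adjoint U)" unfolding P_def using U by blast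
  then have "P (SOME B. P B)" by (rule someI)
  then obtain W e where W: "unitary_mat n W" and AW: "?A = W * real_diag_mat n e * mat_adjoint W"
    and M: "(SOME B. P B) = W * real_diag_mat n (\<lambda>i. f (e i)) * mat_adjoint W" unfolding P_def
      by blast
  have "matfun n f ?A = (SOME B. P B)" unfolding matfun_def P_def ..
  also have "\<dots> = U * real_diag_mat n (\<lambda>i. f (d i)) * mat_adjoint U"
    unfolding M by (rule unitary_diag_fun_unique[OF W U AW[symmetric]])
  finally show ?thesis .
qed

lemma matfun_real_diag_mat: "matfun n f (real_diag_mat n d) = real_diag_mat n (\<lambda>i. f (d i))"
  using matfun_unitary_diag[OF unitary_mat_one, of n f d] by simp

lemma index_real_diag_mat_mult_vec:
  assumes a: "a \<in> carrier_vec n" and i: "i < n"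
  shows "(real_diag_mat n d *\<^sub>v a) $ i = complex_of_real (d i) * a $ i"
proof -
  have "(real_diag_mat n d *\<^sub>v a) $ i = (\<Sum>j<n. if j = i then complex_of_real (d i) * a $ i else 0)"
    unfolding index_mult_mat_vec_sum[OF real_diag_mat_carrier a i] using i
      by (intro sum.cong refl) auto
  then show ?thesis using i by simp
qed

lemma cscalar_prod_unitary_diag:
  assumes U: "unitary_mat n U" and x: "x \<in> carrier_vec n" and y: "y \<in> carrier_vec n"
  shows "((U * real_diag_mat n d * mat_adjoint U) *\<^sub>v x) \<bullet>c y =
    (\<Sum>i<n. complex_of_real (d i) * (mat_adjoint U *\<^sub>v x) $ i * cnj ((mat_adjoint U *\<^sub>v y) $ i))"
proof -
  have Uc: "U \<in> carrier_mat n n" and UH: "mat_adjoint U \<in> carrier_mat n n"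
    using U unitary_mat_carrier by auto
  define a where "a = mat_adjoint U *\<^sub>v x"
  have a: "a \<in> carrier_vec n" unfolding a_def using UH x by simp
  have "(U * real_diag_mat n d * mat_adjoint U) *\<^sub>v x = U *\<^sub>v (real_diag_mat n d *\<^sub>v a)"
    unfolding a_def using Uc x by (simp add: square_mat_mult_simps[where n = n])
  then have "((U * real_diag_mat n d * mat_adjoint U) *\<^sub>v x) \<bullet>c y
      = (real_diag_mat n d *\<^sub>v a) \<bullet>c (mat_adjoint U *\<^sub>v y)"
    using cscalar_prod_mat_adjoint[OF Uc mult_mat_vec_carrier[OF real_diag_mat_carrier a] y] by simp
  also have "\<dots> = (\<Sum>i<n. complex_of_real (d i) * a $ i * cnj ((mat_adjoint U *\<^sub>v y) $ i))"
    using UH y by (simp add: cscalar_prod_sum[OF mult_mat_vec_carrier[OF UH y]]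
        index_real_diag_mat_mult_vec[OF a] del: index_mult_mat_vec)
  finally show ?thesis unfolding a_def .
qed

lemma Re_cscalar_prod_unitary_diag:
  assumes "unitary_mat n U" and "x \<in> carrier_vec n"
  shows "Re (((U * real_diag_mat n d * mat_adjoint U) *\<^sub>v x) \<bullet>c x) =
    (\<Sum>i<n. d i * (cmod ((mat_adjoint U *\<^sub>v x) $ i))\<^sup>2)"
  unfolding cscalar_prod_unitary_diag[OF assms assms(2)] Re_sum
  by (intro sum.cong refl) (simp add: mult.assoc complex_norm_square[symmetric])

lemma unitary_diag_eigenvector:
  assumes U: "unitary_mat n U" and k: "k < n"
  shows "U *\<^sub>v unit_vec n k \<in> carrier_vec n"
    and "(U *\<^sub>v unit_vec n k) \<bullet>c (U *\<^sub>v unit_vec n k) = 1"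
    and "((U * real_diag_mat n d * mat_adjoint U) *\<^sub>v (U *\<^sub>v unit_vec n k)) \<bullet>c (U *\<^sub>v unit_vec n k)
      = complex_of_real (d k)"
proof -
  have Uc: "U \<in> carrier_mat n n" and UH: "mat_adjoint U \<in> carrier_mat n n"
    using U unitary_mat_carrier by auto
  have e: "unit_vec n k \<in> carrier_vec n" by simp
  show Ue: "U *\<^sub>v unit_vec n k \<in> carrier_vec n" using Uc by simp
  have ee: "unit_vec n k \<bullet>c unit_vec n k = (1 :: complex)" by (rule cscalar_prod_unit_vec[OF k])
  then show "(U *\<^sub>v unit_vec n k) \<bullet>c (U *\<^sub>v unit_vec n k) = 1"
    by (simp add: unitary_mat_cscalar_prod[OF U e e])
  have UHe: "mat_adjoint U *\<^sub>v (U *\<^sub>v unit_vec n k) = unit_vec n k"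
    unfolding assoc_mult_mat_vec[OF UH Uc e, symmetric] unitary_mat_adjoint_mult[OF U] by simp
  have "((U * real_diag_mat n d * mat_adjoint U) *\<^sub>v (U *\<^sub>v unit_vec n k)) \<bullet>c (U *\<^sub>v unit_vec n k)
      = (\<Sum>i<n. complex_of_real (d i) * unit_vec n k $ i * cnj (unit_vec n k $ i))"
    by (simp only: cscalar_prod_unitary_diag[OF U Ue Ue] UHe)
  also have "\<dots> = (\<Sum>i<n. if i = k then complex_of_real (d k) else 0)"
    by (intro sum.cong refl) (auto simp: unit_vec_def)
  finally show "((U * real_diag_mat n d * mat_adjoint U) *\<^sub>v (U *\<^sub>v unit_vec n k)) \<bullet>c (U *\<^sub>v unit_vec n k)
      = complex_of_real (d k)"
    using k by simp
qed

lemma hermitian_unitary_diag: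
  assumes "unitary_mat n U"
  shows "hermitian_mat n (U * real_diag_mat n d * mat_adjoint U)"
proof -
  have "hermitian_mat n (real_diag_mat n d)" unfolding hermitian_mat_def by simp
  from hermitian_mat_congruence[OF this mat_adjoint_carrier[OF unitary_mat_carrier[OF assms]]]
  show ?thesis by simp
qed

lemma posdef_unitary_diag:
  assumes U: "unitary_mat n U" and d: "\<And>i. i < n \<Longrightarrow> 0 < d i"
  shows "posdef_mat n (U * real_diag_mat n d * mat_adjoint U)"
  unfolding posdef_mat_def
proof (intro conjI hermitian_unitary_diag[OF U] ballI impI)
  fix x :: "complex vec" assume x: "x \<in> carrier_vec n" and x0: "x \<noteq> 0\<^sub>v n"
  define a where "a = mat_adjoint U *\<^sub>v x"
  have a: "a \<in> carrier_vec n" unfolding a_def using U x by (simp add: square_mat_mult_simps)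
  have "a \<bullet>c a = x \<bullet>c x"
    unfolding a_def by (rule unitary_mat_cscalar_prod[OF unitary_mat_adjoint[OF U] x x])
  then have "a \<noteq> 0\<^sub>v n" using x x0 a by auto
  then have "\<exists>i<n. a $ i \<noteq> 0" using a by (auto intro: eq_vecI)
  then obtain i where i: "i < n" and ai: "a $ i \<noteq> 0" by blast
  show "0 < Re (((U * real_diag_mat n d * mat_adjoint U) *\<^sub>v x) \<bullet>c x)"
    unfolding Re_cscalar_prod_unitary_diag[OF U x] a_def[symmetric]
  proof (rule sum_pos2[of _ i])
    show "0 \<le> d j * (cmod (a $ j))\<^sup>2" if "j \<in> {..<n}" for j using d[of j] that by simp
  qed (use i ai d in auto)
qed

lemma possemidef_unitary_diag:
  assumes U: "unitary_mat n U" and d: "\<And>i. i < n \<Longrightarrow> 0 \<le> d i"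
  shows "possemidef_mat n (U * real_diag_mat n d * mat_adjoint U)"
  unfolding possemidef_mat_def
proof (intro conjI hermitian_unitary_diag[OF U] ballI)
  fix x :: "complex vec" assume x: "x \<in> carrier_vec n"
  show "0 \<le> Re (((U * real_diag_mat n d * mat_adjoint U) *\<^sub>v x) \<bullet>c x)"
    unfolding Re_cscalar_prod_unitary_diag[OF U x] using d by (intro sum_nonneg) simp
qed

lemma posdef_unitary_diag_pos:
  assumes "posdef_mat n (U * real_diag_mat n d * mat_adjoint U)" and U: "unitary_mat n U" and k: "k < n"
  shows "0 < d k"
proof -
  have "U *\<^sub>v unit_vec n k \<noteq> 0\<^sub>v n" using unitary_diag_eigenvector(2)[OF U k] by auto
  then show ?thesis
    using assms(1) unitary_diag_eigenvector(1)[OF U k] unitary_diag_eigenvector(3)[OF U k, of d]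
    unfolding posdef_mat_def by force
qed

lemma cmod_cscalar_prod_unitary_diag_le:
  assumes U: "unitary_mat n U" and x: "x \<in> carrier_vec n" and y: "y \<in> carrier_vec n"
    and xx: "x \<bullet>c x = 1" and yy: "y \<bullet>c y = 1" and M: "\<And>i. i < n \<Longrightarrow> \<bar>d i\<bar> \<le> M" and M0: "0 \<le> M"
  shows "cmod (((U * real_diag_mat n d * mat_adjoint U) *\<^sub>v x) \<bullet>c y) \<le> M"
proof -
  define a where "a = mat_adjoint U *\<^sub>v x"
  define b where "b = mat_adjoint U *\<^sub>v y"
  have a: "a \<in> carrier_vec n" and b: "b \<in> carrier_vec n"
    unfolding a_def b_def using U x y by (simp_all add: square_mat_mult_simps)
  have "a \<bullet>c a = 1" "b \<bullet>c b = 1" unfolding a_def b_def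
    using unitary_mat_cscalar_prod[OF unitary_mat_adjoint[OF U]] x y xx yy by auto
  then have sa: "(\<Sum>i<n. (cmod (a $ i))\<^sup>2) = 1" and sb: "(\<Sum>i<n. (cmod (b $ i))\<^sup>2) = 1"
    using cscalar_prod_self[OF a] cscalar_prod_self[OF b] by (metis of_real_eq_1_iff)+
  have "cmod (((U * real_diag_mat n d * mat_adjoint U) *\<^sub>v x) \<bullet>c y)
      \<le> (\<Sum>i<n. cmod (complex_of_real (d i) * a $ i * cnj (b $ i)))"
    unfolding cscalar_prod_unitary_diag[OF U x y] a_def b_def by (rule norm_sum)
  also have "\<dots> \<le> (\<Sum>i<n. M * (((cmod (a $ i))\<^sup>2 + (cmod (b $ i))\<^sup>2) / 2))"
  proof (rule sum_mono)
    fix i assume "i \<in> {..<n}"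
    have "cmod (a $ i) * cmod (b $ i) \<le> ((cmod (a $ i))\<^sup>2 + (cmod (b $ i))\<^sup>2) / 2"
      using sum_squares_bound[of "cmod (a $ i)" "cmod (b $ i)"] by (simp add: power2_eq_square)
    then show "cmod (complex_of_real (d i) * a $ i * cnj (b $ i))
        \<le> M * (((cmod (a $ i))\<^sup>2 + (cmod (b $ i))\<^sup>2) / 2)"
      using M[of i] \<open>i \<in> {..<n}\<close> M0 by (simp add: norm_mult mult.assoc mult_mono)
  qed
  also have "\<dots> = M"
    using sa sb by (simp add: sum_distrib_left[symmetric] sum.distrib sum_divide_distrib[symmetric])
  finally show ?thesis .
qed

section \<open>The q-numerical radius\<close>

lemma exists_unit_orthogonal:
  assumes n: "2 \<le> n" and x: "(x :: complex vec) \<in> carrier_vec n"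
  shows "\<exists>z \<in> carrier_vec n. z \<bullet>c z = 1 \<and> x \<bullet>c z = 0"
proof -
  define w where "w = vec n (\<lambda>i. if i = 0 then - cnj (x $ 1) else if i = 1 then cnj (x $ 0) else 0)"
  have w: "w \<in> carrier_vec n" unfolding w_def by simp
  have two: "(\<Sum>i<n. g i) = g 0 + g 1" if "\<And>i. 2 \<le> i \<Longrightarrow> i < n \<Longrightarrow> g i = (0::complex)" for g
  proof -
    have "(\<Sum>i<n. g i) = (\<Sum>i\<in>{0,1}. g i)" using n that by (intro sum.mono_neutral_right) auto
    then show ?thesis by simp
  qed
  have xw: "x \<bullet>c w = 0"
    unfolding cscalar_prod_sum[OF w] using n by (subst two) (auto simp: w_def)
  show ?thesis
  proof (cases "w = 0\<^sub>v n")
    case True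
    have "w $ 0 = 0" "w $ 1 = 0" using True n by auto
    then have "x $ 0 = 0" "x $ 1 = 0" using n unfolding w_def by auto
    then have "x \<bullet>c unit_vec n 0 = 0" using n x by (simp add: cscalar_prod_sum[of _ n] unit_vec_def)
    moreover have "unit_vec n 0 \<bullet>c unit_vec n 0 = (1 :: complex)"
      using n by (simp add: cscalar_prod_unit_vec)
    ultimately show ?thesis by (intro bexI[of _ "unit_vec n 0"]) auto
  next
    case False
    let ?z = "complex_of_real (1 / vnorm w) \<cdot>\<^sub>v w"
    have "?z \<bullet>c ?z = 1" by (rule cscalar_prod_normalize[OF w False])
    moreover have "x \<bullet>c ?z = 0" using x w xw by (simp add: cscalar_prod_smult_right[of _ n])
    ultimately show ?thesis using w by (intro bexI[of _ ?z]) auto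
  qed
qed

lemma q_partner_vec:
  assumes x: "x \<in> carrier_vec n" and z: "z \<in> carrier_vec n"
    and xx: "x \<bullet>c x = 1" and zz: "z \<bullet>c z = 1" and xz: "x \<bullet>c z = 0" and c: "c * c = 1 - (cmod q)\<^sup>2"
  defines "y \<equiv> cnj q \<cdot>\<^sub>v x + complex_of_real c \<cdot>\<^sub>v z"
  shows "y \<in> carrier_vec n" and "y \<bullet>c y = 1" and "x \<bullet>c y = q"
    and "\<And>v. v \<in> carrier_vec n \<Longrightarrow> v \<bullet>c y = q * (v \<bullet>c x) + complex_of_real c * (v \<bullet>c z)"
proof -
  show y: "y \<in> carrier_vec n" unfolding y_def using x z by simp
  show yv: "v \<bullet>c y = q * (v \<bullet>c x) + complex_of_real c * (v \<bullet>c z)" if v: "v \<in> carrier_vec n" for v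
    unfolding y_def using x z v
      by (simp add: cscalar_prod_add_right[of _ n] cscalar_prod_smult_right[of _ n])
  have zx: "z \<bullet>c x = 0" using cscalar_prod_swap[OF z x] xz by simp
  show "x \<bullet>c y = q" using yv[OF x] xx xz by simp
  have "y \<bullet>c y = cnj q * q * (x \<bullet>c x) + complex_of_real (c * c) * (z \<bullet>c z)
      + cnj q * complex_of_real c * (x \<bullet>c z) + complex_of_real c * q * (z \<bullet>c x)"
    unfolding y_def using x z
    by (simp add: cscalar_prod_add_right[of _ n] cscalar_prod_add_left[of _ n]
        cscalar_prod_smult_right[of _ n] cscalar_prod_smult_left[of _ n] algebra_simps)
  also have "\<dots> = complex_of_real ((cmod q)\<^sup>2 + c * c)"
    using xx zz xz zx by (simp add: complex_norm_square[symmetric] mult.commute)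
  finally show "y \<bullet>c y = 1" using c by simp
qed

definition q_numerical_range :: "nat \<Rightarrow> complex \<Rightarrow> complex mat \<Rightarrow> complex set" where
  "q_numerical_range n q A = {(A *\<^sub>v x) \<bullet>c y | x y. x \<in> carrier_vec n \<and> y \<in> carrier_vec n \<and>
     x \<bullet>c x = 1 \<and> y \<bullet>c y = 1 \<and> x \<bullet>c y = q}"

lemma wq_eq_Sup_q_numerical_range: "wq n q A = Sup (cmod ` q_numerical_range n q A)"
  unfolding wq_def q_numerical_range_def
  by (rule arg_cong[where f = Sup]) (fastforce simp: vnorm_eq_1_iff image_iff)

lemma q_numerical_rangeI:
  "x \<in> carrier_vec n \<Longrightarrow> y \<in> carrier_vec n \<Longrightarrow> x \<bullet>c x = 1 \<Longrightarrow> y \<bullet>c y = 1 \<Longrightarrow> x \<bullet>c y = q \<Longrightarrow>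
   (A *\<^sub>v x) \<bullet>c y \<in> q_numerical_range n q A"
  unfolding q_numerical_range_def by blast

text \<open>This is where n >= 2 is needed: for n = 1 and |q| < 1 there is no admissible pair, and
  wq is the junk value Sup {}.\<close>

lemma q_numerical_range_nonempty:
  assumes n: "2 \<le> n" and q: "cmod q \<le> 1"
  shows "q_numerical_range n q A \<noteq> {}"
proof -
  define x :: "complex vec" where "x = unit_vec n 0"
  have x: "x \<in> carrier_vec n" and xx: "x \<bullet>c x = 1"
    unfolding x_def using n cscalar_prod_unit_vec[of 0 n] by auto
  obtain z where z: "z \<in> carrier_vec n" "z \<bullet>c z = 1" "x \<bullet>c z = 0"
    using exists_unit_orthogonal[OF n x] by blast
  have "sqrt (1 - (cmod q)\<^sup>2) * sqrt (1 - (cmod q)\<^sup>2) = 1 - (cmod q)\<^sup>2"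
    using q by (simp add: power_le_one)
  note y = q_partner_vec[OF x z(1) xx z(2) z(3) this]
  show ?thesis using q_numerical_rangeI[OF x y(1) xx y(2) y(3)] by blast
qed

lemma bdd_above_q_numerical_range:
  assumes "hermitian_mat n H"
  shows "bdd_above (cmod ` q_numerical_range n q H)"
proof -
  obtain U d where U: "unitary_mat n U" and H: "H = U * real_diag_mat n d * mat_adjoint U"
    using hermitian_mat_spectral[OF assms] by blast
  define M where "M = (\<Sum>i<n. \<bar>d i\<bar>)"
  have M: "\<bar>d i\<bar> \<le> M" if "i < n" for i unfolding M_def using that by (intro member_le_sum) auto
  have M0: "0 \<le> M" unfolding M_def by (intro sum_nonneg) auto
  show ?thesis
  proof (rule bdd_aboveI)
    fix t assume "t \<in> cmod ` q_numerical_range n q H"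
    then obtain x y where "x \<in> carrier_vec n" "y \<in> carrier_vec n" "x \<bullet>c x = 1" "y \<bullet>c y = 1"
      and t: "t = cmod ((H *\<^sub>v x) \<bullet>c y)"
      unfolding q_numerical_range_def by blast
    then show "t \<le> M" unfolding t H by (intro cmod_cscalar_prod_unitary_diag_le[OF U _ _ _ _ M M0])
  qed
qed

lemma cmod_le_wq:
  assumes "hermitian_mat n H" and "z \<in> q_numerical_range n q H"
  shows "cmod z \<le> wq n q H"
  unfolding wq_eq_Sup_q_numerical_range
  by (rule cSup_upper[OF imageI[OF assms(2)] bdd_above_q_numerical_range[OF assms(1)]])

lemma wq_le:
  assumes "2 \<le> n" and "cmod q \<le> 1" and "\<And>z. z \<in> q_numerical_range n q A \<Longrightarrow> cmod z \<le> M"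
  shows "wq n q A \<le> M"
  unfolding wq_eq_Sup_q_numerical_range
  using q_numerical_range_nonempty[OF assms(1,2)] assms(3) by (intro cSup_least) auto

lemma wq_unitary_diag_le:
  assumes n: "2 \<le> n" and q: "cmod q \<le> 1" and U: "unitary_mat n U" and M: "\<And>i. i < n \<Longrightarrow> \<bar>d i\<bar> \<le> M"
  shows "wq n q (U * real_diag_mat n d * mat_adjoint U) \<le> M"
proof (rule wq_le[OF n q])
  have M0: "0 \<le> M" using M[of 0] n by simp
  fix z assume "z \<in> q_numerical_range n q (U * real_diag_mat n d * mat_adjoint U)"
  then obtain x y where "x \<in> carrier_vec n" "y \<in> carrier_vec n" "x \<bullet>c x = 1" "y \<bullet>c y = 1"
    and z: "z = ((U * real_diag_mat n d * mat_adjoint U) *\<^sub>v x) \<bullet>c y"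
    unfolding q_numerical_range_def by blast
  then show "cmod z \<le> M" unfolding z by (intro cmod_cscalar_prod_unitary_diag_le[OF U _ _ _ _ M M0])
qed

text \<open>The partners y = conj(q) x +- c z of x give the values q (Hx . x) +- c (Hx . z); the
  triangle inequality applied to their sum isolates the first term.\<close>

lemma cmod_cscalar_prod_self_le_wq:
  assumes n: "2 \<le> n" and q: "cmod q \<le> 1" and H: "hermitian_mat n H"
    and x: "x \<in> carrier_vec n" and xx: "x \<bullet>c x = 1"
  shows "cmod q * cmod ((H *\<^sub>v x) \<bullet>c x) \<le> wq n q H"
proof -
  obtain z where z: "z \<in> carrier_vec n" "z \<bullet>c z = 1" "x \<bullet>c z = 0"
    using exists_unit_orthogonal[OF n x] by blast
  define r where "r = sqrt (1 - (cmod q)\<^sup>2)"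
  have r: "r * r = 1 - (cmod q)\<^sup>2" "(- r) * (- r) = 1 - (cmod q)\<^sup>2"
    unfolding r_def using q by (simp_all add: power_le_one)
  have Hx: "H *\<^sub>v x \<in> carrier_vec n" using mult_mat_vec_carrier[OF hermitian_mat_carrier[OF H] x] .
  define a where "a = q * ((H *\<^sub>v x) \<bullet>c x)"
  define b where "b = complex_of_real r * ((H *\<^sub>v x) \<bullet>c z)"
  note y1 = q_partner_vec[OF x z(1) xx z(2) z(3) r(1)]
  note y2 = q_partner_vec[OF x z(1) xx z(2) z(3) r(2)]
  have "cmod (a + b) \<le> wq n q H" "cmod (a - b) \<le> wq n q H"
    using cmod_le_wq[OF H q_numerical_rangeI[OF x y1(1) xx y1(2) y1(3)]]
      cmod_le_wq[OF H q_numerical_rangeI[OF x y2(1) xx y2(2) y2(3)]]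
    unfolding a_def b_def y1(4)[OF Hx] y2(4)[OF Hx] by simp_all
  moreover have "2 * cmod a \<le> cmod (a + b) + cmod (a - b)"
    using norm_triangle_ineq[of "a + b" "a - b"] by (simp add: norm_mult[symmetric])
  ultimately show ?thesis unfolding a_def by (simp add: norm_mult)
qed

lemma wq_unitary_diag_bounds:
  assumes n: "2 \<le> n" and q: "cmod q \<le> 1" and U: "unitary_mat n U" and k: "k < n"
    and d: "\<And>i. i < n \<Longrightarrow> 0 \<le> d i \<and> d i \<le> d k"
  shows "cmod q * d k \<le> wq n q (U * real_diag_mat n d * mat_adjoint U)"
    and "wq n q (U * real_diag_mat n d * mat_adjoint U) \<le> d k"
proof -
  show "wq n q (U * real_diag_mat n d * mat_adjoint U) \<le> d k"
    using d by (intro wq_unitary_diag_le[OF n q U]) auto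
  show "cmod q * d k \<le> wq n q (U * real_diag_mat n d * mat_adjoint U)"
    using cmod_cscalar_prod_self_le_wq[OF n q hermitian_unitary_diag[OF U, of d]
        unitary_diag_eigenvector(1,2)[OF U k]] unitary_diag_eigenvector(3)[OF U k, of d] d[OF k]
    by simp
qed

lemma smult_mat_mult_vec:
  "A \<in> carrier_mat n m \<Longrightarrow> x \<in> carrier_vec m \<Longrightarrow> (c \<cdot>\<^sub>m A) *\<^sub>v x = c \<cdot>\<^sub>v (A *\<^sub>v (x :: complex vec))"
  by (intro eq_vecI) (auto simp: scalar_prod_def sum_distrib_left mult.assoc)

lemma wq_lincomb_le:
  assumes n: "2 \<le> n" and q: "cmod q \<le> 1" and X: "hermitian_mat n X" and Y: "hermitian_mat n Y"
    and a: "0 \<le> \<alpha>" and b: "0 \<le> \<beta>"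
  shows "wq n q (complex_of_real \<alpha> \<cdot>\<^sub>m X + complex_of_real \<beta> \<cdot>\<^sub>m Y) \<le> \<alpha> * wq n q X + \<beta> * wq n q Y"
proof (rule wq_le[OF n q])
  have Xc: "X \<in> carrier_mat n n" and Yc: "Y \<in> carrier_mat n n" using X Y hermitian_mat_carrier
    by auto
  fix z assume "z \<in> q_numerical_range n q (complex_of_real \<alpha> \<cdot>\<^sub>m X + complex_of_real \<beta> \<cdot>\<^sub>m Y)"
  then obtain x y where x: "x \<in> carrier_vec n" and y: "y \<in> carrier_vec n" and xx: "x \<bullet>c x = 1"
    and yy: "y \<bullet>c y = 1" and xy: "x \<bullet>c y = q"
    and z: "z = ((complex_of_real \<alpha> \<cdot>\<^sub>m X + complex_of_real \<beta> \<cdot>\<^sub>m Y) *\<^sub>v x) \<bullet>c y"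
    unfolding q_numerical_range_def by blast
  have "z = complex_of_real \<alpha> * ((X *\<^sub>v x) \<bullet>c y) + complex_of_real \<beta> * ((Y *\<^sub>v x) \<bullet>c y)"
    unfolding z using Xc Yc x y
    by (simp add: add_mult_distrib_mat_vec[of _ n n] smult_mat_mult_vec[of _ n n]
        cscalar_prod_add_left[of _ n] cscalar_prod_smult_left[of _ n])
  then have "cmod z \<le> cmod (complex_of_real \<alpha> * ((X *\<^sub>v x) \<bullet>c y))
      + cmod (complex_of_real \<beta> * ((Y *\<^sub>v x) \<bullet>c y))"
    by (simp add: norm_triangle_ineq)
  also have "\<dots> = \<alpha> * cmod ((X *\<^sub>v x) \<bullet>c y) + \<beta> * cmod ((Y *\<^sub>v x) \<bullet>c y)"
    using a b by (simp add: norm_mult)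
  also have "\<dots> \<le> \<alpha> * wq n q X + \<beta> * wq n q Y"
    using cmod_le_wq[OF X q_numerical_rangeI[OF x y xx yy xy]]
      cmod_le_wq[OF Y q_numerical_rangeI[OF x y xx yy xy]] a b
    by (intro add_mono mult_left_mono) auto
  finally show "cmod z \<le> \<alpha> * wq n q X + \<beta> * wq n q Y" .
qed

section \<open>Operator monotone functions\<close>

lemma posdef_real_diag_mat:
  "(\<And>i. i < n \<Longrightarrow> 0 < d i) \<Longrightarrow> posdef_mat n (real_diag_mat n d)"
  using posdef_unitary_diag[OF unitary_mat_one, of n d] by simp

lemma possemidef_real_diag_mat:
  "(\<And>i. i < n \<Longrightarrow> 0 \<le> d i) \<Longrightarrow> possemidef_mat n (real_diag_mat n d)"
  using possemidef_unitary_diag[OF unitary_mat_one, of n d] by simp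

lemma possemidef_diag_nonneg:
  assumes P: "possemidef_mat n M" and k: "k < n"
  shows "0 \<le> Re (M $$ (k,k))"
proof -
  have M: "M \<in> carrier_mat n n" using P unfolding possemidef_mat_def hermitian_mat_def by simp
  have e: "unit_vec n k \<in> carrier_vec n" by simp
  have "(M *\<^sub>v unit_vec n k) \<bullet>c unit_vec n k = (\<Sum>i<n. if i = k then (M *\<^sub>v unit_vec n k) $ k else 0)"
    unfolding cscalar_prod_sum[OF e] by (intro sum.cong refl) (auto simp: unit_vec_def)
  also have "\<dots> = (\<Sum>j<n. M $$ (k,j) * unit_vec n k $ j)"
    using k by (simp add: index_mult_mat_vec_sum[OF M e k] del: index_mult_mat_vec)
  also have "\<dots> = (\<Sum>j<n. if j = k then M $$ (k,k) else 0)"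
    by (intro sum.cong refl) (auto simp: unit_vec_def)
  finally have "(M *\<^sub>v unit_vec n k) \<bullet>c unit_vec n k = M $$ (k,k)" using k by simp
  then show ?thesis using P e unfolding possemidef_mat_def by metis
qed

lemma loewner_le_real_diag_mat_iff:
  "loewner_le n (real_diag_mat n d) (real_diag_mat n e) \<longleftrightarrow> (\<forall>i<n. d i \<le> e i)"
proof -
  have diff: "real_diag_mat n e - real_diag_mat n d = real_diag_mat n (\<lambda>i. e i - d i)"
    by (rule eq_matI) auto
  have herm: "hermitian_mat n (real_diag_mat n g)" for g unfolding hermitian_mat_def by simp
  show ?thesis
  proof
    assume "loewner_le n (real_diag_mat n d) (real_diag_mat n e)"
    then have "possemidef_mat n (real_diag_mat n (\<lambda>i. e i - d i))"
      unfolding loewner_le_def diff by simp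
    then show "\<forall>i<n. d i \<le> e i" using possemidef_diag_nonneg by fastforce
  next
    assume "\<forall>i<n. d i \<le> e i"
    then show "loewner_le n (real_diag_mat n d) (real_diag_mat n e)"
      unfolding loewner_le_def diff using herm by (auto intro!: possemidef_real_diag_mat)
  qed
qed

lemma operator_monotone_pos: "operator_monotone f \<Longrightarrow> 0 < x \<Longrightarrow> 0 < f x"
  unfolding operator_monotone_def by blast

lemma operator_monotone_mono:
  assumes f: "operator_monotone f" and a: "0 < a" and ab: "a \<le> b"
  shows "f a \<le> f b"
proof -
  have "loewner_le 1 (real_diag_mat 1 (\<lambda>_. a)) (real_diag_mat 1 (\<lambda>_. b))"
    using ab by (simp add: loewner_le_real_diag_mat_iff)
  moreover have "posdef_mat 1 (real_diag_mat 1 (\<lambda>_. a))" "posdef_mat 1 (real_diag_mat 1 (\<lambda>_. b))"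
    using a ab by (auto intro!: posdef_real_diag_mat)
  ultimately have "loewner_le 1 (matfun 1 f (real_diag_mat 1 (\<lambda>_. a)))
      (matfun 1 f (real_diag_mat 1 (\<lambda>_. b)))"
    using f unfolding operator_monotone_def by blast
  then show ?thesis by (simp add: matfun_real_diag_mat loewner_le_real_diag_mat_iff)
qed

lemma operator_monotone_nonneg_mono:
  "operator_monotone f \<Longrightarrow> 0 < u \<Longrightarrow> u \<le> v \<Longrightarrow> 0 \<le> f u \<and> f u \<le> f v"
  using operator_monotone_pos operator_monotone_mono by (simp add: less_imp_le)

lemma possemidef_mat_2x2:
  assumes N: "N \<in> carrier_mat 2 2"
    and N00: "N $$ (0,0) = complex_of_real \<alpha>" and N11: "N $$ (1,1) = complex_of_real \<beta>"
    and N01: "N $$ (0,1) = complex_of_real c" and N10: "N $$ (1,0) = complex_of_real c"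
    and \<alpha>: "0 < \<alpha>" and det: "c\<^sup>2 \<le> \<alpha> * \<beta>"
  shows "possemidef_mat 2 N"
  unfolding possemidef_mat_def hermitian_mat_def
proof (intro conjI ballI N)
  have less2: "i < 2 \<Longrightarrow> i = 0 \<or> i = 1" for i :: nat by auto
  show "mat_adjoint N = N"
    by (rule eq_matI) (use N N00 N11 N01 N10 in \<open>auto dest!: less2\<close>)
  fix x :: "complex vec" assume x: "x \<in> carrier_vec 2"
  define u v where "u = cmod (x $ 0)" and "v = cmod (x $ 1)"
  have "(N *\<^sub>v x) \<bullet>c x = (\<Sum>i<2. (\<Sum>j<2. N $$ (i,j) * x $ j) * cnj (x $ i))"
    unfolding cscalar_prod_sum[OF x] using N x
    by (intro sum.cong refl) (simp add: index_mult_mat_vec_sum[OF N x] del: index_mult_mat_vec)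
  also have "\<dots> = complex_of_real \<alpha> * (x $ 0 * cnj (x $ 0)) + complex_of_real \<beta> * (x $ 1 * cnj (x $ 1))
      + complex_of_real c * (x $ 1 * cnj (x $ 0) + x $ 0 * cnj (x $ 1))"
    unfolding sum_lessThan_2 N00 N11 N01 N10 by (simp add: algebra_simps)
  finally have "Re ((N *\<^sub>v x) \<bullet>c x) = \<alpha> * u\<^sup>2 + \<beta> * v\<^sup>2 + c * (2 * Re (x $ 0 * cnj (x $ 1)))"
    unfolding u_def v_def
    by (simp add: complex_norm_square[symmetric] cnj_add_mult_eq_Re[symmetric] mult.commute)
  moreover have "\<bar>Re (x $ 0 * cnj (x $ 1))\<bar> \<le> u * v"
    unfolding u_def v_def using abs_Re_le_cmod[of "x $ 0 * cnj (x $ 1)"] by (simp add: norm_mult)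
  then have "\<bar>c * Re (x $ 0 * cnj (x $ 1))\<bar> \<le> \<bar>c\<bar> * (u * v)"
    unfolding abs_mult by (rule mult_left_mono) simp
  then have "- (c * Re (x $ 0 * cnj (x $ 1))) \<le> \<bar>c\<bar> * (u * v)" by (simp add: abs_le_iff)
  then have "- (2 * \<bar>c\<bar> * u * v) \<le> c * (2 * Re (x $ 0 * cnj (x $ 1)))" by (simp add: algebra_simps)
  moreover have "0 \<le> \<alpha> * (\<alpha> * u\<^sup>2 + \<beta> * v\<^sup>2 - 2 * \<bar>c\<bar> * u * v)"
  proof -
    have "\<alpha> * (\<alpha> * u\<^sup>2 + \<beta> * v\<^sup>2 - 2 * \<bar>c\<bar> * u * v) = (\<alpha> * u - \<bar>c\<bar> * v)\<^sup>2 + (\<alpha> * \<beta> - c\<^sup>2) * v\<^sup>2"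
      by (simp add: algebra_simps power2_eq_square)
    then show ?thesis using det by simp
  qed
  then have "0 \<le> \<alpha> * u\<^sup>2 + \<beta> * v\<^sup>2 - 2 * \<bar>c\<bar> * u * v" using \<alpha> by (simp add: zero_le_mult_iff)
  ultimately show "0 \<le> Re ((N *\<^sub>v x) \<bullet>c x)" by linarith
qed

definition rotation_mat2 :: "real \<Rightarrow> real \<Rightarrow> complex mat" where
  "rotation_mat2 p r = mat 2 2 (\<lambda>(i,j). if i = j then complex_of_real p
     else if i = 0 then - complex_of_real r else complex_of_real r)"

lemma rotation_mat2_carrier: "rotation_mat2 p r \<in> carrier_mat 2 2"
  unfolding rotation_mat2_def by simp

lemma unitary_rotation_mat2:
  assumes "p * p + r * r = 1"
  shows "unitary_mat 2 (rotation_mat2 p r)"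
proof (rule unitary_matI[OF rotation_mat2_carrier])
  have s: "complex_of_real p * complex_of_real p + complex_of_real r * complex_of_real r = 1"
    using assms by (simp flip: of_real_mult of_real_add)
  show "mat_adjoint (rotation_mat2 p r) * rotation_mat2 p r = 1\<^sub>m 2"
  proof (rule eq_matI)
    fix i j assume "i < dim_row (1\<^sub>m 2 :: complex mat)" "j < dim_col (1\<^sub>m 2 :: complex mat)"
    then have ij: "i < 2" "j < 2" by auto
    then have "i = 0 \<or> i = 1" "j = 0 \<or> j = 1" by auto
    then show "(mat_adjoint (rotation_mat2 p r) * rotation_mat2 p r) $$ (i,j) = 1\<^sub>m 2 $$ (i,j)"
      unfolding index_mult_mat_sum[OF mat_adjoint_carrier[OF rotation_mat2_carrier]
          rotation_mat2_carrier ij]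
        sum_lessThan_2
      using s by (auto simp: rotation_mat2_def algebra_simps)
  qed (simp_all add: rotation_mat2_def)
qed

lemma index_rotation_mat2_conj_diag:
  fixes p r :: real and h :: "nat \<Rightarrow> real"
  defines "M \<equiv> rotation_mat2 p r * real_diag_mat 2 h * mat_adjoint (rotation_mat2 p r)"
  shows "M $$ (0,0) = complex_of_real (p * p * h 0 + r * r * h 1)"
    and "M $$ (0,1) = complex_of_real (p * r * (h 0 - h 1))"
    and "M $$ (1,0) = complex_of_real (p * r * (h 0 - h 1))"
    and "M $$ (1,1) = complex_of_real (r * r * h 0 + p * p * h 1)"
proof -
  have ij: "(0::nat) < 2" "(1::nat) < 2" by simp_all
  note entry = index_unitary_diag[OF rotation_mat2_carrier[of p r], where d = h, folded M_def,
      unfolded sum_lessThan_2]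
  show "M $$ (0,0) = complex_of_real (p * p * h 0 + r * r * h 1)"
    "M $$ (0,1) = complex_of_real (p * r * (h 0 - h 1))"
    "M $$ (1,0) = complex_of_real (p * r * (h 0 - h 1))"
    "M $$ (1,1) = complex_of_real (r * r * h 0 + p * p * h 1)"
    unfolding entry[OF ij(1) ij(1)] entry[OF ij(1) ij(2)] entry[OF ij(2) ij(1)] entry[OF ij(2) ij(2)]
    by (simp_all add: rotation_mat2_def algebra_simps)
qed

lemma convex_comb_pos:
  fixes a b l :: real
  assumes "0 < a" "0 < b" "0 \<le> l" "l \<le> 1"
  shows "0 < l * a + (1 - l) * b"
proof (cases "l = 0")
  case False
  then show ?thesis using assms by (intro add_pos_nonneg) auto
qed (use assms in simp)

text \<open>Rotating diag(a, b) by the angle with cos^2 = l puts the mean l a + (1 - l) b in the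
  upper left corner. Once y exceeds that mean, the rotated matrix lies below diag(y, mu) for large mu,
  and comparing the upper left corners after applying f gives the inequality.\<close>

lemma operator_monotone_jensen_strict:
  assumes f: "operator_monotone f" and a: "0 < a" and b: "0 < b" and l: "0 \<le> l" "l \<le> 1"
    and y: "l * a + (1 - l) * b < y"
  shows "l * f a + (1 - l) * f b \<le> f y"
proof -
  define V where "V = rotation_mat2 (sqrt l) (sqrt (1 - l))"
  have V: "unitary_mat 2 V" unfolding V_def by (rule unitary_rotation_mat2) (use l in simp)
  define t where "t = (\<lambda>k::nat. if k = 0 then a else b)"
  define M where "M = V * real_diag_mat 2 t * mat_adjoint V"
  define c where "c = sqrt l * sqrt (1 - l) * (a - b)"
  define \<alpha> where "\<alpha> = y - (l * a + (1 - l) * b)"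
  define g where "g = (\<lambda>k::nat. if k = 0 then y else (1 - l) * a + l * b + (c\<^sup>2 / \<alpha> + 1))"
  have \<alpha>: "0 < \<alpha>" unfolding \<alpha>_def using y by simp
  have tg: "t 0 = a" "t 1 = b" "g 0 = y" "g 1 = (1 - l) * a + l * b + (c\<^sup>2 / \<alpha> + 1)"
    unfolding t_def g_def by simp_all
  have M: "M $$ (0,0) = complex_of_real (l * a + (1 - l) * b)" "M $$ (0,1) = complex_of_real c"
    "M $$ (1,0) = complex_of_real c" "M $$ (1,1) = complex_of_real ((1 - l) * a + l * b)"
    unfolding M_def V_def c_def
      using index_rotation_mat2_conj_diag[of "sqrt l" "sqrt (1 - l)" t] tg l
    by (simp_all add: abs_of_nonneg)
  have Mc: "M \<in> carrier_mat 2 2" unfolding M_def using V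
    by (simp add: square_mat_mult_simps[where n = 2])
  then have GM: "(real_diag_mat 2 g - M) $$ (i,j) = real_diag_mat 2 g $$ (i,j) - M $$ (i,j)"
    if "i < 2" "j < 2" for i j using that by auto
  have "possemidef_mat 2 (real_diag_mat 2 g - M)"
  proof (rule possemidef_mat_2x2[where \<alpha> = \<alpha> and \<beta> = "c\<^sup>2 / \<alpha> + 1" and c = "- c"])
    show "real_diag_mat 2 g - M \<in> carrier_mat 2 2" using Mc by (rule minus_carrier_mat)
    show "(- c)\<^sup>2 \<le> \<alpha> * (c\<^sup>2 / \<alpha> + 1)" using \<alpha> by (simp add: field_simps)
  qed (use M tg y in \<open>simp_all add: GM \<alpha>_def\<close>)
  moreover have "posdef_mat 2 M" unfolding M_def
    by (rule posdef_unitary_diag[OF V]) (use a b in \<open>simp add: t_def\<close>)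
  moreover have "posdef_mat 2 (real_diag_mat 2 g)"
  proof (rule posdef_real_diag_mat)
    have "0 < y" using \<alpha> convex_comb_pos[OF a b l] unfolding \<alpha>_def by simp
    moreover have "0 < (1 - l) * a + l * b + (c\<^sup>2 / \<alpha> + 1)"
      using a b l \<alpha> by (intro add_nonneg_pos add_nonneg_nonneg) simp_all
    ultimately show "0 < g i" for i by (simp add: g_def)
  qed
  ultimately have "loewner_le 2 (matfun 2 f M) (matfun 2 f (real_diag_mat 2 g))"
    using f unfolding operator_monotone_def loewner_le_def posdef_mat_def by blast
  then have "possemidef_mat 2 (real_diag_mat 2 (\<lambda>k. f (g k))
      - V * real_diag_mat 2 (\<lambda>k. f (t k)) * mat_adjoint V)"
    unfolding loewner_le_def M_def matfun_unitary_diag[OF V] matfun_real_diag_mat by simp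
  moreover have "V * real_diag_mat 2 (\<lambda>k. f (t k)) * mat_adjoint V \<in> carrier_mat 2 2"
    using V by (simp add: square_mat_mult_simps[where n = 2])
  ultimately show ?thesis
    using possemidef_diag_nonneg[of 2 _ 0] l
      index_rotation_mat2_conj_diag(1)[of "sqrt l" "sqrt (1 - l)" "\<lambda>k. f (t k)", folded V_def]
    by (force simp: g_def t_def abs_of_nonneg)
qed

lemma operator_monotone_scale_strict:
  assumes f: "operator_monotone f" and s: "0 < s" "s < 1" and y: "0 < y" and Y: "s * y < Y"
  shows "s * f y \<le> f Y"
proof -
  define \<epsilon> where "\<epsilon> = (Y - s * y) / (2 * (1 - s))"
  have \<epsilon>: "0 < \<epsilon>" unfolding \<epsilon>_def using s Y by simp
  have "(1 - s) * \<epsilon> = (Y - s * y) / 2" unfolding \<epsilon>_def using s by (simp add: field_simps)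
  then have "s * y + (1 - s) * \<epsilon> < Y" using Y by simp
  then have "s * f y + (1 - s) * f \<epsilon> \<le> f Y"
    using s by (intro operator_monotone_jensen_strict[OF f y \<epsilon>]) auto
  moreover have "0 \<le> (1 - s) * f \<epsilon>" using operator_monotone_pos[OF f \<epsilon>] s by simp
  ultimately show ?thesis by linarith
qed

lemma operator_monotone_scale:
  assumes f: "operator_monotone f" and y: "0 < y" and s: "0 < s" "s \<le> 1"
  shows "s * f y \<le> f (s * y)"
proof (rule field_le_mult_one_interval)
  fix z :: real assume z: "0 < z" "z < 1"
  have zs: "0 < z * s" "z * s < 1"
    using z s mult_less_le_imp_less[OF z(2) s(2)] by simp_all
  have "z * s * y < s * y" using mult_strict_right_mono[OF z(2), of "s * y"] s y
    by (simp add: mult.assoc)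
  then have "(z * s) * f y \<le> f (s * y)" by (rule operator_monotone_scale_strict[OF f zs y])
  then show "z * (s * f y) \<le> f (s * y)" by (simp add: mult.assoc)
qed

lemma operator_monotone_concave:
  assumes f: "operator_monotone f" and a: "0 < a" and b: "0 < b" and l: "0 \<le> l" "l \<le> 1"
  shows "l * f a + (1 - l) * f b \<le> f (l * a + (1 - l) * b)"
proof (rule field_le_mult_one_interval)
  define m where "m = l * a + (1 - l) * b"
  have m: "0 < m" unfolding m_def by (rule convex_comb_pos[OF a b l])
  fix z :: real assume z: "0 < z" "z < 1"
  have "m < m / z" using m z by (simp add: less_divide_eq mult_less_cancel_left1)
  then have "l * f a + (1 - l) * f b \<le> f (m / z)"
    unfolding m_def by (rule operator_monotone_jensen_strict[OF f a b l])
  then have "z * (l * f a + (1 - l) * f b) \<le> z * f (m / z)" using z by simp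
  also have "\<dots> \<le> f (z * (m / z))" by (rule operator_monotone_scale[OF f]) (use m z in auto)
  finally show "z * (l * f a + (1 - l) * f b) \<le> f (l * a + (1 - l) * b)" using z
    by (simp add: m_def)
qed

lemma hermitian_mat_add:
  "hermitian_mat n A \<Longrightarrow> hermitian_mat n B \<Longrightarrow> hermitian_mat n (A + B)"
  unfolding hermitian_mat_def by (auto simp: mat_adjoint_add)

lemma posdef_mat_add:
  assumes A: "posdef_mat n A" and B: "posdef_mat n B"
  shows "posdef_mat n (A + B)"
  unfolding posdef_mat_def
proof (intro conjI hermitian_mat_add ballI impI)
  show "hermitian_mat n A" "hermitian_mat n B" using A B unfolding posdef_mat_def by auto
  then have Ac: "A \<in> carrier_mat n n" and Bc: "B \<in> carrier_mat n n"
    by (auto simp: hermitian_mat_carrier)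
  fix x :: "complex vec" assume x: "x \<in> carrier_vec n" and x0: "x \<noteq> 0\<^sub>v n"
  have "((A + B) *\<^sub>v x) \<bullet>c x = (A *\<^sub>v x) \<bullet>c x + (B *\<^sub>v x) \<bullet>c x"
    using Ac Bc x by (simp add: add_mult_distrib_mat_vec[OF Ac Bc x] cscalar_prod_add_left[of _ n])
  moreover have "0 < Re ((A *\<^sub>v x) \<bullet>c x)" "0 < Re ((B *\<^sub>v x) \<bullet>c x)"
    using A B x x0 unfolding posdef_mat_def by auto
  ultimately show "0 < Re (((A + B) *\<^sub>v x) \<bullet>c x)" by simp
qed

lemma hermitian_matfun:
  assumes "hermitian_mat n A"
  shows "hermitian_mat n (matfun n f A)"
proof -
  obtain U a where U: "unitary_mat n U" and "A = U * real_diag_mat n a * mat_adjoint U"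
    using hermitian_mat_spectral[OF assms] by blast
  then show ?thesis using matfun_unitary_diag[OF U] hermitian_unitary_diag[OF U] by simp
qed

lemma posdef_matfun:
  assumes A: "posdef_mat n A" and g: "\<And>x. 0 < x \<Longrightarrow> 0 < g x"
  shows "posdef_mat n (matfun n g A)"
proof -
  obtain U a where U: "unitary_mat n U" and Aeq: "A = U * real_diag_mat n a * mat_adjoint U"
    using hermitian_mat_spectral A unfolding posdef_mat_def by blast
  show ?thesis unfolding Aeq matfun_unitary_diag[OF U]
    using posdef_unitary_diag_pos[OF A[unfolded Aeq] U] g by (intro posdef_unitary_diag[OF U]) auto
qed

text \<open>Here rho is the largest eigenvalue of A and x a unit eigenvector for it.\<close>

lemma posdef_mat_top_eigenvalue:
  assumes n: "2 \<le> n" and q: "cmod q \<le> 1" and A: "posdef_mat n A"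
  obtains \<rho> x where "0 < \<rho>" and "x \<in> carrier_vec n" and "x \<bullet>c x = 1"
    and "(A *\<^sub>v x) \<bullet>c x = complex_of_real \<rho>"
    and "cmod q * \<rho> \<le> wq n q A" and "wq n q A \<le> \<rho>"
    and "\<And>g. (\<And>u v. 0 < u \<Longrightarrow> u \<le> v \<Longrightarrow> 0 \<le> g u \<and> g u \<le> g v) \<Longrightarrow>
      cmod q * g \<rho> \<le> wq n q (matfun n g A) \<and> wq n q (matfun n g A) \<le> g \<rho>"
proof -
  obtain U a where U: "unitary_mat n U" and Aeq: "A = U * real_diag_mat n a * mat_adjoint U"
    using hermitian_mat_spectral A unfolding posdef_mat_def by blast
  have "Max (a ` {..<n}) \<in> a ` {..<n}" using n by (intro Max_in) (simp_all add: lessThan_empty_iff)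
  then obtain k where k: "k < n" and ak: "a k = Max (a ` {..<n})" by (auto simp: image_iff)
  have a: "0 < a i \<and> a i \<le> a k" if "i < n" for i
    using posdef_unitary_diag_pos[OF A[unfolded Aeq] U that] ak that by simp
  have "cmod q * g (a k) \<le> wq n q (matfun n g A) \<and> wq n q (matfun n g A) \<le> g (a k)"
    if g: "\<And>u v. 0 < u \<Longrightarrow> u \<le> v \<Longrightarrow> 0 \<le> g u \<and> g u \<le> g v" for g
    unfolding Aeq matfun_unitary_diag[OF U]
    using wq_unitary_diag_bounds[OF n q U k, of "\<lambda>i. g (a i)"] a g by auto
  moreover have "cmod q * a k \<le> wq n q A" "wq n q A \<le> a k"
    unfolding Aeq using wq_unitary_diag_bounds[OF n q U k, of a] a by (auto simp: less_imp_le)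
  ultimately show ?thesis
    using that[of "a k" "U *\<^sub>v unit_vec n k"] a[OF k] unitary_diag_eigenvector(1,2)[OF U k]
      unitary_diag_eigenvector(3)[OF U k, of a]
    unfolding Aeq by blast
qed

theorem wq_matfun_bounds:
  assumes n: "2 \<le> n" and A: "posdef_mat n A" and q: "0 < cmod q" "cmod q \<le> 1"
    and f: "operator_monotone f"
  shows "(cmod q)\<^sup>2 * f (wq n q A) \<le> cmod q * wq n q (matfun n f A)"
    and "cmod q * wq n q (matfun n f A) \<le> f (wq n q A)"
proof -
  obtain \<rho> where \<rho>: "0 < \<rho>" and wA: "cmod q * \<rho> \<le> wq n q A" "wq n q A \<le> \<rho>"
    and G: "\<And>g. (\<And>u v. 0 < u \<Longrightarrow> u \<le> v \<Longrightarrow> 0 \<le> g u \<and> g u \<le> g v) \<Longrightarrow>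
      cmod q * g \<rho> \<le> wq n q (matfun n g A) \<and> wq n q (matfun n g A) \<le> g \<rho>"
    using posdef_mat_top_eigenvalue[OF n q(2) A] by blast
  note wfA = G[where g = f, OF operator_monotone_nonneg_mono[OF f]]
  have wA0: "0 < wq n q A" using wA(1) q(1) \<rho> by (smt (verit) mult_pos_pos)
  have "(cmod q)\<^sup>2 * f (wq n q A) \<le> cmod q * (cmod q * f \<rho>)"
    using mult_left_mono[OF operator_monotone_mono[OF f wA0 wA(2)], of "(cmod q)\<^sup>2"]
    by (simp add: power2_eq_square mult.assoc)
  also have "\<dots> \<le> cmod q * wq n q (matfun n f A)"
    using mult_left_mono[OF conjunct1[OF wfA] norm_ge_zero] .
  finally show "(cmod q)\<^sup>2 * f (wq n q A) \<le> cmod q * wq n q (matfun n f A)" .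
  have "cmod q * wq n q (matfun n f A) \<le> cmod q * f \<rho>"
    using mult_left_mono[OF conjunct2[OF wfA] norm_ge_zero] .
  also have "\<dots> \<le> f (cmod q * \<rho>)" by (rule operator_monotone_scale[OF f \<rho> q])
  also have "\<dots> \<le> f (wq n q A)" using operator_monotone_mono[OF f _ wA(1)] \<rho> q(1) by simp
  finally show "cmod q * wq n q (matfun n f A) \<le> f (wq n q A)" .
qed

theorem wq_matfun_convex_comb_le:
  assumes n: "2 \<le> n" and A: "posdef_mat n A" and B: "posdef_mat n B"
    and q: "0 < cmod q" "cmod q \<le> 1" and f: "operator_monotone f" and \<gamma>: "0 \<le> \<gamma>" "\<gamma> \<le> 1"
  shows "cmod q * wq n q (complex_of_real (1 - \<gamma>) \<cdot>\<^sub>m matfun n f A + complex_of_real \<gamma> \<cdot>\<^sub>m matfun n f B)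
    \<le> f ((1 - \<gamma>) * wq n q A + \<gamma> * wq n q B)"
proof -
  obtain \<rho> where \<rho>: "0 < \<rho>" and wA: "cmod q * \<rho> \<le> wq n q A" "wq n q A \<le> \<rho>"
    and GA: "\<And>g. (\<And>u v. 0 < u \<Longrightarrow> u \<le> v \<Longrightarrow> 0 \<le> g u \<and> g u \<le> g v) \<Longrightarrow>
      cmod q * g \<rho> \<le> wq n q (matfun n g A) \<and> wq n q (matfun n g A) \<le> g \<rho>"
    using posdef_mat_top_eigenvalue[OF n q(2) A] by blast
  obtain \<sigma> where \<sigma>: "0 < \<sigma>" and wB: "cmod q * \<sigma> \<le> wq n q B" "wq n q B \<le> \<sigma>"
    and GB: "\<And>g. (\<And>u v. 0 < u \<Longrightarrow> u \<le> v \<Longrightarrow> 0 \<le> g u \<and> g u \<le> g v) \<Longrightarrow>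
      cmod q * g \<sigma> \<le> wq n q (matfun n g B) \<and> wq n q (matfun n g B) \<le> g \<sigma>"
    using posdef_mat_top_eigenvalue[OF n q(2) B] by blast
  define m where "m = (1 - \<gamma>) * \<rho> + \<gamma> * \<sigma>"
  have m: "0 < m" unfolding m_def using convex_comb_pos[OF \<rho> \<sigma>, of "1 - \<gamma>"] \<gamma> by simp
  have hA: "hermitian_mat n A" and hB: "hermitian_mat n B" using A B unfolding posdef_mat_def
    by auto
  have "wq n q (complex_of_real (1 - \<gamma>) \<cdot>\<^sub>m matfun n f A + complex_of_real \<gamma> \<cdot>\<^sub>m matfun n f B)
      \<le> (1 - \<gamma>) * wq n q (matfun n f A) + \<gamma> * wq n q (matfun n f B)"
    using \<gamma> by (intro wq_lincomb_le[OF n q(2)] hermitian_matfun hA hB) auto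
  also have "\<dots> \<le> (1 - \<gamma>) * f \<rho> + \<gamma> * f \<sigma>"
    using \<gamma> GA[where g = f, OF operator_monotone_nonneg_mono[OF f]]
      GB[where g = f, OF operator_monotone_nonneg_mono[OF f]]
    by (intro add_mono mult_left_mono) auto
  also have "\<dots> \<le> f m"
    using operator_monotone_concave[OF f \<rho> \<sigma>, of "1 - \<gamma>"] \<gamma> unfolding m_def by simp
  finally have "cmod q * wq n q (complex_of_real (1 - \<gamma>) \<cdot>\<^sub>m matfun n f A
      + complex_of_real \<gamma> \<cdot>\<^sub>m matfun n f B)
      \<le> cmod q * f m"
    by (rule mult_left_mono) simp
  also have "\<dots> \<le> f (cmod q * m)" by (rule operator_monotone_scale[OF f m q])
  also have "\<dots> \<le> f ((1 - \<gamma>) * wq n q A + \<gamma> * wq n q B)"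
  proof (rule operator_monotone_mono[OF f])
    show "0 < cmod q * m" using q m by simp
    have "cmod q * m = (1 - \<gamma>) * (cmod q * \<rho>) + \<gamma> * (cmod q * \<sigma>)"
      unfolding m_def by (simp add: algebra_simps)
    also have "\<dots> \<le> (1 - \<gamma>) * wq n q A + \<gamma> * wq n q B"
      using \<gamma> wA wB by (intro add_mono mult_left_mono) auto
    finally show "cmod q * m \<le> (1 - \<gamma>) * wq n q A + \<gamma> * wq n q B" .
  qed
  finally show ?thesis .
qed

lemma le_powr_mult_powr:
  fixes u L t :: real
  assumes u: "0 < u" and uL: "u powr t \<le> L" and t: "0 < t" "t \<le> 1"
  shows "u \<le> L powr ((1 - t) / t) * u powr t"
proof -
  have "u powr (1 - t) = (u powr t) powr ((1 - t) / t)" using u t by (simp add: powr_powr)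
  also have "\<dots> \<le> L powr ((1 - t) / t)" using t uL by (intro powr_mono2) auto
  finally have "u powr (1 - t) * u powr t \<le> L powr ((1 - t) / t) * u powr t"
    by (rule mult_right_mono) simp
  then show ?thesis using u by (simp add: powr_add[symmetric])
qed

lemma Re_cscalar_prod_unitary_diag_le_powr:
  assumes U: "unitary_mat n U" and d: "\<And>i. i < n \<Longrightarrow> 0 < d i \<and> d i powr t \<le> L"
    and t: "0 < t" "t \<le> 1" and z: "z \<in> carrier_vec n"
  shows "Re (((U * real_diag_mat n d * mat_adjoint U) *\<^sub>v z) \<bullet>c z)
    \<le> L powr ((1 - t) / t) * Re (((U * real_diag_mat n (\<lambda>i. d i powr t) * mat_adjoint U) *\<^sub>v z) \<bullet>c z)"
  unfolding Re_cscalar_prod_unitary_diag[OF U z] sum_distrib_left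
proof (rule sum_mono)
  fix i assume "i \<in> {..<n}"
  then have "d i \<le> L powr ((1 - t) / t) * d i powr t" using d t by (intro le_powr_mult_powr) auto
  then show "d i * (cmod ((mat_adjoint U *\<^sub>v z) $ i))\<^sup>2
      \<le> L powr ((1 - t) / t) * (d i powr t * (cmod ((mat_adjoint U *\<^sub>v z) $ i))\<^sup>2)"
    by (metis mult.assoc mult_right_mono zero_le_power2)
qed

lemma posdef_form_pos:
  "posdef_mat n X \<Longrightarrow> v \<in> carrier_vec n \<Longrightarrow> v \<bullet>c v = 1 \<Longrightarrow> 0 < Re ((X *\<^sub>v v) \<bullet>c v)"
  unfolding posdef_mat_def by auto

lemma posdef_form_le_powr:
  assumes A: "posdef_mat n A" and t: "0 < t" "t \<le> 1"
    and L: "\<And>z. z \<in> carrier_vec n \<Longrightarrow> z \<bullet>c z = 1 \<Longrightarrow> Re ((matfun n (\<lambda>x. x powr t) A *\<^sub>v z) \<bullet>c z) \<le> L"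
    and z: "z \<in> carrier_vec n"
  shows "Re ((A *\<^sub>v z) \<bullet>c z) \<le> L powr ((1 - t) / t) * Re ((matfun n (\<lambda>x. x powr t) A *\<^sub>v z) \<bullet>c z)"
proof -
  obtain U a where U: "unitary_mat n U" and Aeq: "A = U * real_diag_mat n a * mat_adjoint U"
    using hermitian_mat_spectral A unfolding posdef_mat_def by blast
  have "0 < a i \<and> a i powr t \<le> L" if i: "i < n" for i
    using posdef_unitary_diag_pos[OF A[unfolded Aeq] U i] L[OF unitary_diag_eigenvector(1,2)[OF U i]]
      unitary_diag_eigenvector(3)[OF U i, of "\<lambda>i. a i powr t"]
    unfolding Aeq matfun_unitary_diag[OF U] by simp
  then show ?thesis
    unfolding Aeq matfun_unitary_diag[OF U]
      by (rule Re_cscalar_prod_unitary_diag_le_powr[OF U _ t z])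
qed

lemma posdef_add_form_le_powr:
  assumes A: "posdef_mat n A" and B: "posdef_mat n B" and t: "0 < t" "t \<le> 1"
    and L: "\<And>z. z \<in> carrier_vec n \<Longrightarrow> z \<bullet>c z = 1 \<Longrightarrow>
      Re ((matfun n (\<lambda>x. x powr t) A *\<^sub>v z) \<bullet>c z) + Re ((matfun n (\<lambda>x. x powr t) B *\<^sub>v z) \<bullet>c z) \<le> L"
    and z: "z \<in> carrier_vec n" "z \<bullet>c z = 1"
  shows "Re (((A + B) *\<^sub>v z) \<bullet>c z) \<le> L powr (1 / t)"
proof -
  define P Q where "P = matfun n (\<lambda>x. x powr t) A" and "Q = matfun n (\<lambda>x. x powr t) B"
  have pP: "posdef_mat n P" and pQ: "posdef_mat n Q"
    unfolding P_def Q_def using A B by (auto intro!: posdef_matfun)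
  have LP: "Re ((P *\<^sub>v v) \<bullet>c v) \<le> L" and LQ: "Re ((Q *\<^sub>v v) \<bullet>c v) \<le> L"
    if "v \<in> carrier_vec n" "v \<bullet>c v = 1" for v
    using L[OF that] posdef_form_pos[OF pP that] posdef_form_pos[OF pQ that]
    unfolding P_def Q_def by linarith+
  have L0: "0 < L" using LP[OF z] posdef_form_pos[OF pP z] by linarith
  define K where "K = L powr ((1 - t) / t)"
  have Ac: "A \<in> carrier_mat n n" and Bc: "B \<in> carrier_mat n n"
    using A B unfolding posdef_mat_def hermitian_mat_def by auto
  have "Re (((A + B) *\<^sub>v z) \<bullet>c z) = Re ((A *\<^sub>v z) \<bullet>c z) + Re ((B *\<^sub>v z) \<bullet>c z)"
    using Ac Bc z
      by (simp add: add_mult_distrib_mat_vec[OF Ac Bc z(1)] cscalar_prod_add_left[of _ n])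
  also have "\<dots> \<le> K * (Re ((P *\<^sub>v z) \<bullet>c z) + Re ((Q *\<^sub>v z) \<bullet>c z))"
    using posdef_form_le_powr[OF A t LP[unfolded P_def] z(1)]
        posdef_form_le_powr[OF B t LQ[unfolded Q_def] z(1)]
    unfolding K_def P_def Q_def distrib_left by simp
  also have "\<dots> \<le> K * L" unfolding K_def using L[OF z] by (simp add: P_def Q_def mult_left_mono)
  also have "K * L = L powr ((1 - t) / t + 1)" unfolding K_def using L0 by (simp add: powr_add)
  also have "(1 - t) / t + 1 = 1 / t" using t by (simp add: field_simps)
  finally show ?thesis .
qed

theorem wq_matfun_powr_add_le:
  assumes n: "2 \<le> n" and A: "posdef_mat n A" and B: "posdef_mat n B"
    and q: "0 < cmod q" "cmod q \<le> 1" and t: "0 < t" "t \<le> 1"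
  shows "cmod q * wq n q (matfun n (\<lambda>x. x powr t) (A + B))
    \<le> wq n q (matfun n (\<lambda>x. x powr t) A + matfun n (\<lambda>x. x powr t) B)"
proof -
  define P Q where "P = matfun n (\<lambda>x. x powr t) A" and "Q = matfun n (\<lambda>x. x powr t) B"
  have pP: "posdef_mat n P" and pQ: "posdef_mat n Q"
    unfolding P_def Q_def using A B by (auto intro!: posdef_matfun)
  then have hP: "hermitian_mat n P" and hQ: "hermitian_mat n Q" and Pc: "P \<in> carrier_mat n n"
    and Qc: "Q \<in> carrier_mat n n" unfolding posdef_mat_def hermitian_mat_def by auto
  define L where "L = wq n q (P + Q) / cmod q"
  have L: "Re ((P *\<^sub>v z) \<bullet>c z) + Re ((Q *\<^sub>v z) \<bullet>c z) \<le> L" if z: "z \<in> carrier_vec n" "z \<bullet>c z = 1" for z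
  proof -
    have "cmod q * Re (((P + Q) *\<^sub>v z) \<bullet>c z) \<le> cmod q * cmod (((P + Q) *\<^sub>v z) \<bullet>c z)"
      by (intro mult_left_mono complex_Re_le_cmod) simp
    also have "\<dots> \<le> wq n q (P + Q)"
      by (rule cmod_cscalar_prod_self_le_wq[OF n q(2) hermitian_mat_add[OF hP hQ] z])
    finally show ?thesis unfolding L_def using q(1) Pc Qc z
      by (simp add: field_simps add_mult_distrib_mat_vec[OF Pc Qc z(1)] cscalar_prod_add_left[of _ n])
  qed
  obtain \<rho> x where \<rho>: "0 < \<rho>" and x: "x \<in> carrier_vec n" "x \<bullet>c x = 1"
    and ABx: "((A + B) *\<^sub>v x) \<bullet>c x = complex_of_real \<rho>"
    and "cmod q * \<rho> \<le> wq n q (A + B)" "wq n q (A + B) \<le> \<rho>"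
    and G: "\<And>g. (\<And>u v. 0 < u \<Longrightarrow> u \<le> v \<Longrightarrow> 0 \<le> g u \<and> g u \<le> g v) \<Longrightarrow>
      cmod q * g \<rho> \<le> wq n q (matfun n g (A + B)) \<and> wq n q (matfun n g (A + B)) \<le> g \<rho>"
    using posdef_mat_top_eigenvalue[OF n q(2) posdef_mat_add[OF A B]] by blast
  have L0: "0 \<le> L" using L[OF x] posdef_form_pos[OF pP x] posdef_form_pos[OF pQ x] by linarith
  have powr_mono: "0 \<le> u powr t \<and> u powr t \<le> v powr t" if "0 < u" "u \<le> v" for u v
    using that t by (simp add: powr_mono2)
  have "wq n q (matfun n (\<lambda>x. x powr t) (A + B)) \<le> \<rho> powr t"
    using G[where g = "\<lambda>x. x powr t"] powr_mono by blast
  also have "\<rho> powr t \<le> L"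
  proof -
    have "\<rho> \<le> L powr (1 / t)"
      using posdef_add_form_le_powr[OF A B t L[unfolded P_def Q_def] x] ABx by simp
    then show ?thesis using powr_mono2[of t \<rho> "L powr (1 / t)"] \<rho> t L0 by (simp add: powr_powr)
  qed
  finally have "cmod q * wq n q (matfun n (\<lambda>x. x powr t) (A + B)) \<le> cmod q * L"
    by (rule mult_left_mono) simp
  then show ?thesis unfolding L_def P_def Q_def using q(1) by simp
qed

theorem mainTheorem8:
  fixes n :: nat and A B :: "complex mat" and q :: complex and f :: "real \<Rightarrow> real"
  assumes "n \<ge> 2"
    and "posdef_mat n A" and "posdef_mat n B"
    and "0 < cmod q" and "cmod q \<le> 1"
    and "f \<in> class_F"
  shows "((cmod q)\<^sup>2 * f (wq n q A) \<le> cmod q * wq n q (matfun n f A)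
         \<and> cmod q * wq n q (matfun n f A) \<le> f (wq n q A))
    \<and> (\<forall>\<gamma>::real. 0 < \<gamma> \<and> \<gamma> < 1 \<longrightarrow>
         cmod q * wq n q ((complex_of_real (1 - \<gamma>)) \<cdot>\<^sub>m matfun n f A + (complex_of_real \<gamma>) \<cdot>\<^sub>m matfun n f B)
         \<le> f ((1 - \<gamma>) * wq n q A + \<gamma> * wq n q B))
    \<and> (\<forall>t::real. 0 < t \<and> t < 1 \<longrightarrow>
         cmod q * wq n q (matfun n (\<lambda>x. x powr t) (A + B))
         \<le> wq n q (matfun n (\<lambda>x. x powr t) A + matfun n (\<lambda>x. x powr t) B))"
proof -
  have f: "operator_monotone f" using assms(6) unfolding class_F_def by simp
  show ?thesis
    using wq_matfun_bounds[OF assms(1,2,4,5) f] wq_matfun_convex_comb_le[OF assms(1-5) f]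
      wq_matfun_powr_add_le[OF assms(1-5)]
    by auto
qed

end
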